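(* Let $G$ be a finite group and $S\le H$ subgroups of $G$ with $S\trianglelefteq G$. Let $\theta\in\mathrm{Irr}(H)$ lie above $\lambda\in\mathrm{Irr}(S)$, and let $\theta_\lambda\in\mathrm{Irr}(H(\lambda))$ be the $\lambda$-Clifford correspondent of $\theta$. If $\theta$ extends to its stabilizer $G(\theta)$ in $G$, then $\theta_\lambda$ extends to $G(\theta,\lambda)$.
   Context: $K(\phi)$ (resp. $K(\phi_1,\phi_2)$) is the stabilizer in $K$ of $\phi$ (resp. of both $\phi_1$ and $\phi_2$). The $\lambda$-Clifford correspondent $\theta_\lambda$ is the unique irreducible character of $H(\lambda)$ lying above $\lambda$ and inducing $\theta$. *)

theory Defs
  imports "HOL-Algebra.Algebra" "Jordan_Normal_Form.Matrix"
begin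

text \<open>Complex characters of subgroups of a finite group G (HOL-Algebra).
  Class functions on a subgroup H are functions on the element type that vanish
  outside H.\<close>

definition mat_trace :: "complex mat \<Rightarrow> complex" where
  "mat_trace A = (\<Sum>i<dim_row A. A $$ (i, i))"

definition is_rep :: "('a, 'b) monoid_scheme \<Rightarrow> 'a set \<Rightarrow> nat \<Rightarrow> ('a \<Rightarrow> complex mat) \<Rightarrow> bool" where
  "is_rep G H n \<rho> \<longleftrightarrow>
     (\<forall>g\<in>H. \<rho> g \<in> carrier_mat n n) \<and> \<rho> \<one>\<^bsub>G\<^esub> = 1\<^sub>m n \<and>
     (\<forall>g\<in>H. \<forall>h\<in>H. \<rho> (g \<otimes>\<^bsub>G\<^esub> h) = \<rho> g * \<rho> h)"

definition is_subspace :: "nat \<Rightarrow> complex vec set \<Rightarrow> bool" where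
  "is_subspace n W \<longleftrightarrow> W \<subseteq> carrier_vec n \<and> 0\<^sub>v n \<in> W \<and>
     (\<forall>v\<in>W. \<forall>w\<in>W. v + w \<in> W) \<and> (\<forall>c. \<forall>v\<in>W. c \<cdot>\<^sub>v v \<in> W)"

definition irr_rep :: "('a, 'b) monoid_scheme \<Rightarrow> 'a set \<Rightarrow> nat \<Rightarrow> ('a \<Rightarrow> complex mat) \<Rightarrow> bool" where
  "irr_rep G H n \<rho> \<longleftrightarrow> is_rep G H n \<rho> \<and> n > 0 \<and>
     (\<forall>W. is_subspace n W \<and> (\<forall>g\<in>H. \<forall>w\<in>W. \<rho> g *\<^sub>v w \<in> W)
          \<longrightarrow> W = {0\<^sub>v n} \<or> W = carrier_vec n)"

definition char_of :: "'a set \<Rightarrow> ('a \<Rightarrow> complex mat) \<Rightarrow> 'a \<Rightarrow> complex" where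
  "char_of H \<rho> = (\<lambda>g. if g \<in> H then mat_trace (\<rho> g) else 0)"

definition is_character :: "('a, 'b) monoid_scheme \<Rightarrow> 'a set \<Rightarrow> ('a \<Rightarrow> complex) \<Rightarrow> bool" where
  "is_character G H \<chi> \<longleftrightarrow> (\<exists>n \<rho>. is_rep G H n \<rho> \<and> \<chi> = char_of H \<rho>)"

definition Irr :: "('a, 'b) monoid_scheme \<Rightarrow> 'a set \<Rightarrow> ('a \<Rightarrow> complex) set" where
  "Irr G H = {\<chi>. \<exists>n \<rho>. irr_rep G H n \<rho> \<and> \<chi> = char_of H \<rho>}"

definition res :: "'a set \<Rightarrow> ('a \<Rightarrow> complex) \<Rightarrow> 'a \<Rightarrow> complex" where
  "res K \<chi> = (\<lambda>g. if g \<in> K then \<chi> g else 0)"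

definition ind :: "('a, 'b) monoid_scheme \<Rightarrow> 'a set \<Rightarrow> 'a set \<Rightarrow> ('a \<Rightarrow> complex) \<Rightarrow> 'a \<Rightarrow> complex" where
  "ind G K H \<psi> = (\<lambda>g. if g \<in> H then
      (\<Sum>x\<in>H. res K \<psi> (x \<otimes>\<^bsub>G\<^esub> g \<otimes>\<^bsub>G\<^esub> inv\<^bsub>G\<^esub> x)) / of_nat (card K) else 0)"

definition inner_char :: "'a set \<Rightarrow> ('a \<Rightarrow> complex) \<Rightarrow> ('a \<Rightarrow> complex) \<Rightarrow> complex" where
  "inner_char K \<chi> \<psi> = (\<Sum>g\<in>K. \<chi> g * cnj (\<psi> g)) / of_nat (card K)"

definition lies_above :: "'a set \<Rightarrow> ('a \<Rightarrow> complex) \<Rightarrow> ('a \<Rightarrow> complex) \<Rightarrow> bool" where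
  "lies_above S \<theta> lam \<longleftrightarrow> inner_char S (res S \<theta>) lam \<noteq> 0"

definition stab :: "('a, 'b) monoid_scheme \<Rightarrow> 'a set \<Rightarrow> 'a set \<Rightarrow> ('a \<Rightarrow> complex) \<Rightarrow> 'a set" where
  "stab G K H \<phi> = {g \<in> K. (\<lambda>h. inv\<^bsub>G\<^esub> g \<otimes>\<^bsub>G\<^esub> h \<otimes>\<^bsub>G\<^esub> g) ` H = H \<and>
      (\<forall>h\<in>H. \<phi> (g \<otimes>\<^bsub>G\<^esub> h \<otimes>\<^bsub>G\<^esub> inv\<^bsub>G\<^esub> g) = \<phi> h)}"

definition extends_to :: "('a, 'b) monoid_scheme \<Rightarrow> 'a set \<Rightarrow> 'a set \<Rightarrow> ('a \<Rightarrow> complex) \<Rightarrow> bool" where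
  "extends_to G K H \<theta> \<longleftrightarrow> (\<exists>\<chi>. is_character G K \<chi> \<and> res H \<chi> = \<theta>)"

end

(*
  Let sigma afford an extension of theta to E = G(theta), and let
  e = lambda(1)/|S| * sum_{s in S} lambda(s^-1) s be the central idempotent of lambda.
  Conjugation by T = G(theta, lambda) fixes e, so sigma(e) is an idempotent commuting with
  sigma(T), and its image is a representation of T with character t |-> tr (sigma(e) sigma(t)).
  For h in H(lambda), expand theta = theta_lambda^H in tr (sigma(h) sigma(e)) = sum_s e(s) theta(h s).
  The summand of x in H is the trace of tau(x h x^-1) times the conjugate idempotent e^x acting
  on the representation tau of theta_lambda: since theta_lambda lies above lambda, Schur's lemma
  makes tau(e) a nonzero scalar idempotent, i.e. the identity, while for x outside H(lambda) the
  characters lambda^x and lambda are distinct and orthogonality gives tau(e^x) = 0.  The terms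
  with x in H(lambda) contribute theta_lambda(h) each, and the factor 1/|H(lambda)| of the
  induction formula leaves exactly theta_lambda(h).
*)

theory Submission
  imports Defs "Jordan_Normal_Form.Schur_Decomposition"
begin

section \<open>Matrices\<close>

lemma sum_eq_single:
  assumes "finite A" "a \<in> A" "\<And>x. x \<in> A \<Longrightarrow> x \<noteq> a \<Longrightarrow> f x = 0"
  shows "sum f A = f a"
proof -
  have "sum f A = sum f {a}" using assms by (intro sum.mono_neutral_right) auto
  then show ?thesis by simp
qed

lemma index_mult_mat_sum:
  assumes "A \<in> carrier_mat n k" "B \<in> carrier_mat k m" "i < n" "j < m"
  shows "(A * B) $$ (i, j) = (\<Sum>l<k. A $$ (i, l) * B $$ (l, j))"
  using assms by (auto simp: scalar_prod_def atLeast0LessThan)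

lemma mult_mat_assoc4:
  assumes "A \<in> carrier_mat n1 n2" "B \<in> carrier_mat n2 n3" "C \<in> carrier_mat n3 n4" "D \<in> carrier_mat n4 n5"
  shows "A * (B * C * D) = A * B * C * D"
proof -
  have "A * B * C * D = A * (B * C) * D"
    using assms by (simp add: assoc_mult_mat[of A n1 n2 B n3 C n4])
  also have "\<dots> = A * (B * C * D)"
    using assms by (intro assoc_mult_mat) auto
  finally show ?thesis by simp
qed

lemma mult_mat_zero_vec [simp]: "A \<in> carrier_mat n k \<Longrightarrow> A *\<^sub>v 0\<^sub>v k = 0\<^sub>v n"
  by (intro eq_vecI) auto

lemma zero_mat_mult_vec [simp]: "v \<in> carrier_vec m \<Longrightarrow> 0\<^sub>m k m *\<^sub>v v = 0\<^sub>v k"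
  by (intro eq_vecI) auto

lemma index_mult_unit_vec:
  fixes A :: "'a :: semiring_1 mat"
  shows "A \<in> carrier_mat k m \<Longrightarrow> i < k \<Longrightarrow> j < m \<Longrightarrow> (A *\<^sub>v unit_vec m j) $ i = A $$ (i, j)"
  using scalar_prod_right_unit[of j m "row A i"] by simp

lemma mat_eq_if_mult_vec_eq:
  fixes A B :: "'a :: comm_ring_1 mat"
  assumes "A \<in> carrier_mat k m" "B \<in> carrier_mat k m"
    and "\<And>v. v \<in> carrier_vec m \<Longrightarrow> A *\<^sub>v v = B *\<^sub>v v"
  shows "A = B"
proof (rule eq_matI)
  fix i j assume "i < dim_row B" "j < dim_col B"
  then have "i < k" "j < m" using assms by auto
  then show "A $$ (i, j) = B $$ (i, j)"
    using assms index_mult_unit_vec[of A k m i j] index_mult_unit_vec[of B k m i j] by simp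
qed (use assms in auto)

lemma index_mult_single_entry_mult:
  fixes A B :: "'a :: comm_semiring_1 mat"
  assumes A: "A \<in> carrier_mat k k" and B: "B \<in> carrier_mat m m"
    and "i < k" "j < m" "p < k" "q < m"
  shows "(A * mat k m (\<lambda>(r, s). if r = i \<and> s = j then 1 else 0) * B) $$ (p, q) = A $$ (p, i) * B $$ (j, q)"
proof -
  let ?E = "mat k m (\<lambda>(r, s). if r = i \<and> s = j then (1 :: 'a) else 0)"
  have AE: "(A * ?E) $$ (p, l) = (if l = j then A $$ (p, i) else 0)" if "l < m" for l
  proof -
    have "(A * ?E) $$ (p, l) = (\<Sum>r<k. A $$ (p, r) * ?E $$ (r, l))"
      using A assms that by (intro index_mult_mat_sum[of _ k k _ m]) auto
    also have "\<dots> = (\<Sum>r<k. if r = i then (if l = j then A $$ (p, i) else 0) else 0)"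
      using that assms by (intro sum.cong refl) auto
    finally show ?thesis using assms by simp
  qed
  have "(A * ?E * B) $$ (p, q) = (\<Sum>l<m. (A * ?E) $$ (p, l) * B $$ (l, q))"
    using A B assms by (intro index_mult_mat_sum[of _ k m _ m]) auto
  also have "\<dots> = (\<Sum>l<m. if l = j then A $$ (p, i) * B $$ (l, q) else 0)"
    using AE by (intro sum.cong) auto
  finally show ?thesis using assms by simp
qed

lemma mat_trace_mult_comm:
  assumes "A \<in> carrier_mat n m" "B \<in> carrier_mat m n"
  shows "mat_trace (A * B) = mat_trace (B * A)"
proof -
  have "mat_trace (A * B) = (\<Sum>i<n. \<Sum>l<m. A $$ (i, l) * B $$ (l, i))"
    using assms by (auto simp: mat_trace_def index_mult_mat_sum simp del: index_mult_mat(1))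
  also have "\<dots> = (\<Sum>l<m. \<Sum>i<n. B $$ (l, i) * A $$ (i, l))"
    by (subst sum.swap) (simp add: mult.commute)
  also have "\<dots> = mat_trace (B * A)"
    using assms by (auto simp: mat_trace_def index_mult_mat_sum simp del: index_mult_mat(1))
  finally show ?thesis .
qed

lemma mat_trace_smult: "A \<in> carrier_mat n n \<Longrightarrow> mat_trace (c \<cdot>\<^sub>m A) = c * mat_trace A"
  by (simp add: mat_trace_def sum_distrib_left)

lemma mat_trace_one [simp]: "mat_trace (1\<^sub>m n) = of_nat n"
  by (simp add: mat_trace_def)

definition mat_sum :: "nat \<Rightarrow> nat \<Rightarrow> 'a set \<Rightarrow> ('a \<Rightarrow> 'b :: comm_monoid_add mat) \<Rightarrow> 'b mat" where
  "mat_sum k m S f = mat k m (\<lambda>(i, j). \<Sum>a\<in>S. f a $$ (i, j))"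

lemma mat_sum_carrier [simp]: "mat_sum k m S f \<in> carrier_mat k m"
  and dim_mat_sum [simp]: "dim_row (mat_sum k m S f) = k" "dim_col (mat_sum k m S f) = m"
  by (simp_all add: mat_sum_def)

lemma index_mat_sum [simp]: "i < k \<Longrightarrow> j < m \<Longrightarrow> mat_sum k m S f $$ (i, j) = (\<Sum>a\<in>S. f a $$ (i, j))"
  by (simp add: mat_sum_def)

lemma mat_sum_cong: "(\<And>a. a \<in> S \<Longrightarrow> f a = g a) \<Longrightarrow> mat_sum k m S f = mat_sum k m S g"
  unfolding mat_sum_def by (intro cong_mat refl) (auto intro!: sum.cong)

lemma mat_sum_reindex:
  assumes "bij_betw h T S"
  shows "mat_sum k m S f = mat_sum k m T (\<lambda>a. f (h a))"
proof (rule eq_matI)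
  fix i j assume "i < dim_row (mat_sum k m T (\<lambda>a. f (h a)))" "j < dim_col (mat_sum k m T (\<lambda>a. f (h a)))"
  then show "mat_sum k m S f $$ (i, j) = mat_sum k m T (\<lambda>a. f (h a)) $$ (i, j)"
    using sum.reindex_bij_betw[OF assms, of "\<lambda>a. f a $$ (i, j)"] by simp
qed auto

lemma mult_mat_sum:
  fixes B :: "'b :: comm_semiring_0 mat"
  assumes B: "B \<in> carrier_mat n k" and f: "\<And>a. a \<in> S \<Longrightarrow> f a \<in> carrier_mat k m"
  shows "B * mat_sum k m S f = mat_sum n m S (\<lambda>a. B * f a)"
proof (rule eq_matI)
  fix i j assume "i < dim_row (mat_sum n m S (\<lambda>a. B * f a))" "j < dim_col (mat_sum n m S (\<lambda>a. B * f a))"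
  then have ij: "i < n" "j < m" by auto
  have "(B * mat_sum k m S f) $$ (i, j) = (\<Sum>l<k. B $$ (i, l) * (\<Sum>a\<in>S. f a $$ (l, j)))"
    using B ij by (simp add: index_mult_mat_sum[of _ n k _ m] del: index_mult_mat(1))
  also have "\<dots> = (\<Sum>a\<in>S. \<Sum>l<k. B $$ (i, l) * f a $$ (l, j))"
    unfolding sum_distrib_left by (rule sum.swap)
  also have "\<dots> = (\<Sum>a\<in>S. (B * f a) $$ (i, j))"
    using B f ij by (intro sum.cong refl) (simp add: index_mult_mat_sum[of _ n k _ m] del: index_mult_mat(1))
  finally show "(B * mat_sum k m S f) $$ (i, j) = mat_sum n m S (\<lambda>a. B * f a) $$ (i, j)"
    using ij by simp
qed (use B in auto)

lemma mat_sum_mult: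
  fixes B :: "'b :: comm_semiring_0 mat"
  assumes B: "B \<in> carrier_mat m n" and f: "\<And>a. a \<in> S \<Longrightarrow> f a \<in> carrier_mat k m"
  shows "mat_sum k m S f * B = mat_sum k n S (\<lambda>a. f a * B)"
proof (rule eq_matI)
  fix i j assume "i < dim_row (mat_sum k n S (\<lambda>a. f a * B))" "j < dim_col (mat_sum k n S (\<lambda>a. f a * B))"
  then have ij: "i < k" "j < n" by auto
  have "(mat_sum k m S f * B) $$ (i, j) = (\<Sum>l<m. (\<Sum>a\<in>S. f a $$ (i, l)) * B $$ (l, j))"
    using B ij by (simp add: index_mult_mat_sum[of _ k m _ n] del: index_mult_mat(1))
  also have "\<dots> = (\<Sum>a\<in>S. \<Sum>l<m. f a $$ (i, l) * B $$ (l, j))"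
    unfolding sum_distrib_right by (rule sum.swap)
  also have "\<dots> = (\<Sum>a\<in>S. (f a * B) $$ (i, j))"
    using B f ij by (intro sum.cong refl) (simp add: index_mult_mat_sum[of _ k m _ n] del: index_mult_mat(1))
  finally show "(mat_sum k m S f * B) $$ (i, j) = mat_sum k n S (\<lambda>a. f a * B) $$ (i, j)"
    using ij by simp
qed (use B in auto)

lemma mat_trace_mat_sum:
  "(\<And>a. a \<in> S \<Longrightarrow> f a \<in> carrier_mat k k) \<Longrightarrow> mat_trace (mat_sum k k S f) = (\<Sum>a\<in>S. mat_trace (f a))"
  unfolding mat_trace_def by (simp, subst sum.swap) (auto intro!: sum.cong)

lemma mat_inverse_if_bij:
  fixes A :: "'a :: field mat"
  assumes A: "A \<in> carrier_mat k m"
    and inj: "\<And>v. v \<in> carrier_vec m \<Longrightarrow> A *\<^sub>v v = 0\<^sub>v k \<Longrightarrow> v = 0\<^sub>v m"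
    and surj: "\<And>w. w \<in> carrier_vec k \<Longrightarrow> \<exists>v\<in>carrier_vec m. A *\<^sub>v v = w"
  obtains B where "B \<in> carrier_mat m k" "A * B = 1\<^sub>m k" "B * A = 1\<^sub>m m"
proof -
  obtain f where f: "\<And>w. w \<in> carrier_vec k \<Longrightarrow> f w \<in> carrier_vec m \<and> A *\<^sub>v f w = w"
    using surj by metis
  define B where "B = mat_of_cols m (map (\<lambda>j. f (unit_vec k j)) [0..<k])"
  have B: "B \<in> carrier_mat m k"
    unfolding B_def using mat_of_cols_carrier(1)[of m "map (\<lambda>j. f (unit_vec k j)) [0..<k]"] by simp
  have col_B: "col B j = f (unit_vec k j)" if "j < k" for j
    unfolding B_def using that f[of "unit_vec k j"] by simp
  have AB: "A * B = 1\<^sub>m k"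
  proof (rule eq_matI)
    fix i j assume "i < dim_row (1\<^sub>m k :: 'a mat)" "j < dim_col (1\<^sub>m k :: 'a mat)"
    then have ij: "i < k" "j < k" by auto
    have "(A * B) $$ (i, j) = (A *\<^sub>v col B j) $ i" using A B ij by simp
    also have "\<dots> = unit_vec k j $ i" using col_B f[of "unit_vec k j"] ij by simp
    finally show "(A * B) $$ (i, j) = 1\<^sub>m k $$ (i, j)" using ij by simp
  qed (use A B in auto)
  have BA: "B * A = 1\<^sub>m m"
  proof (rule mat_eq_if_mult_vec_eq)
    fix v :: "'a vec" assume v: "v \<in> carrier_vec m"
    have BAv: "B * A *\<^sub>v v \<in> carrier_vec m" using A B v by simp
    have Av: "A *\<^sub>v v \<in> carrier_vec k" using A v by simp
    have "A *\<^sub>v (B * A *\<^sub>v v) = A *\<^sub>v (B *\<^sub>v (A *\<^sub>v v))"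
      using assoc_mult_mat_vec[OF B A v] by simp
    also have "\<dots> = (A * B) *\<^sub>v (A *\<^sub>v v)"
      using assoc_mult_mat_vec[OF A B Av] by simp
    also have "\<dots> = A *\<^sub>v v" using AB Av by simp
    finally have "A *\<^sub>v (B * A *\<^sub>v v - v) = 0\<^sub>v k"
      using A v BAv by (simp add: mult_minus_distrib_mat_vec)
    then have diff: "B * A *\<^sub>v v - v = 0\<^sub>v m"
      using inj BAv v by simp
    show "B * A *\<^sub>v v = 1\<^sub>m m *\<^sub>v v"
    proof (rule eq_vecI)
      fix i assume "i < dim_vec (1\<^sub>m m *\<^sub>v v)"
      then have "i < m" by simp
      then show "(B * A *\<^sub>v v) $ i = (1\<^sub>m m *\<^sub>v v) $ i"
        using arg_cong[OF diff, of "\<lambda>x. x $ i"] BAv v by simp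
    qed (use A B v in simp)
  qed (use A B in auto)
  show ?thesis using that B AB BA by blast
qed

lemma is_subspace_mat_kernel:
  fixes A :: "complex mat"
  assumes A: "A \<in> carrier_mat k m"
  shows "is_subspace m {v \<in> carrier_vec m. A *\<^sub>v v = 0\<^sub>v k}"
  unfolding is_subspace_def
proof (intro conjI ballI allI)
  show "0\<^sub>v m \<in> {v \<in> carrier_vec m. A *\<^sub>v v = 0\<^sub>v k}"
    using A by simp
qed (use A in \<open>auto simp: mult_add_distrib_mat_vec mult_mat_vec\<close>)

lemma is_subspace_mat_image:
  fixes A :: "complex mat"
  assumes A: "A \<in> carrier_mat k m"
  shows "is_subspace k ((*\<^sub>v) A ` carrier_vec m)"
  unfolding is_subspace_def
proof (intro conjI ballI allI)
  have "A *\<^sub>v 0\<^sub>v m = 0\<^sub>v k"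
    using A by simp
  then show "0\<^sub>v k \<in> (*\<^sub>v) A ` carrier_vec m"
    by (metis image_eqI zero_carrier_vec)
  fix v w assume "v \<in> (*\<^sub>v) A ` carrier_vec m" "w \<in> (*\<^sub>v) A ` carrier_vec m"
  then obtain a b where "a \<in> carrier_vec m" "b \<in> carrier_vec m" "v = A *\<^sub>v a" "w = A *\<^sub>v b"
    by blast
  then have "v + w = A *\<^sub>v (a + b)" "a + b \<in> carrier_vec m"
    using A by (simp_all add: mult_add_distrib_mat_vec)
  then show "v + w \<in> (*\<^sub>v) A ` carrier_vec m" by blast
next
  fix c v assume "v \<in> (*\<^sub>v) A ` carrier_vec m"
  then obtain a where "a \<in> carrier_vec m" "v = A *\<^sub>v a" by blast
  then have "c \<cdot>\<^sub>v v = A *\<^sub>v (c \<cdot>\<^sub>v a)" "c \<cdot>\<^sub>v a \<in> carrier_vec m"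
    using A by (simp_all add: mult_mat_vec)
  then show "c \<cdot>\<^sub>v v \<in> (*\<^sub>v) A ` carrier_vec m" by blast
qed (use A in auto)

section \<open>Subrepresentations cut out by commuting idempotents\<close>

lemma upper_triangular_idempotent_first_columns:
  fixes U :: "'a :: idom mat"
  assumes U: "U \<in> carrier_mat d d" and ut: "upper_triangular U" and idem: "U * U = U"
    and "r \<le> d" and one: "\<And>i. i < r \<Longrightarrow> U $$ (i, i) = 1"
    and "i < d" "j < r"
  shows "U $$ (i, j) = (if i = j then 1 else 0)"
proof -
  have lower: "U $$ (i, l) = 0" if "l < i" "i < d" for i l
    using upper_triangularD[OF ut that(1)] that U by simp
  have square: "U $$ (i, j) = (\<Sum>l<d. U $$ (i, l) * U $$ (l, j))" if "i < d" "j < d" for i j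
    using index_mult_mat_sum[OF U U that] idem by simp
  have "\<forall>i<d. U $$ (i, j) = (if i = j then 1 else 0)"
    using \<open>j < r\<close>
  proof (induction j rule: less_induct)
    case (less j)
    have "j < d" using less.prems \<open>r \<le> d\<close> by simp
    show ?case
    proof (intro allI impI)
      fix i assume "i < d"
      consider "j < i" | "i = j" | "i < j" by linarith
      then show "U $$ (i, j) = (if i = j then 1 else 0)"
      proof cases
        case 3
        have "U $$ (i, j) = (\<Sum>l\<in>{i, j}. U $$ (i, l) * U $$ (l, j))"
          unfolding square[OF \<open>i < d\<close> \<open>j < d\<close>]
        proof (rule sum.mono_neutral_right)
          show "\<forall>l\<in>{..<d} - {i, j}. U $$ (i, l) * U $$ (l, j) = 0"
          proof
            fix l assume l: "l \<in> {..<d} - {i, j}"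
            consider "l < i" | "i < l" "l < j" | "j < l" using l by force
            then show "U $$ (i, l) * U $$ (l, j) = 0"
              by cases (use lower less.IH less.prems \<open>i < d\<close> \<open>j < d\<close> l in auto)
          qed
        qed (use \<open>i < d\<close> \<open>j < d\<close> in auto)
        also have "\<dots> = U $$ (i, j) + U $$ (i, j)"
          using 3 one less.prems by simp
        finally have "U $$ (i, j) + U $$ (i, j) = U $$ (i, j) + 0" by simp
        then show ?thesis using 3 by (simp only: add_left_cancel) simp
      qed (use lower one less.prems \<open>i < d\<close> in auto)
    qed
  qed
  then show ?thesis using \<open>i < d\<close> by blast
qed

lemma upper_triangular_idempotent_last_rows:
  fixes U :: "'a :: idom mat"
  assumes U: "U \<in> carrier_mat d d" and ut: "upper_triangular U" and idem: "U * U = U"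
    and not_one: "\<And>i. r \<le> i \<Longrightarrow> i < d \<Longrightarrow> U $$ (i, i) \<noteq> 1"
    and "r \<le> i" "i < d" "j < d"
  shows "U $$ (i, j) = 0"
proof -
  have lower: "U $$ (i, l) = 0" if "l < i" "i < d" for i l
    using upper_triangularD[OF ut that(1)] that U by simp
  have "\<forall>j<d. U $$ (i, j) = 0"
    using \<open>r \<le> i\<close> \<open>i < d\<close>
  proof (induction "d - i" arbitrary: i rule: less_induct)
    case less
    have later_rows: "U $$ (l, j) = 0" if "i < l" "l < d" "j < d" for l j
      using less.hyps[of l] less.prems that by auto
    have row_eq: "U $$ (i, j) = U $$ (i, i) * U $$ (i, j)" if "j < d" for j
    proof -
      have "U $$ (i, j) = (\<Sum>l<d. U $$ (i, l) * U $$ (l, j))"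
        using index_mult_mat_sum[OF U U less.prems(2) that] idem by simp
      also have "\<dots> = U $$ (i, i) * U $$ (i, j)"
      proof (rule sum_eq_single)
        fix l assume "l \<in> {..<d}" "l \<noteq> i"
        then consider "l < i" | "i < l" "l < d" by force
        then show "U $$ (i, l) * U $$ (l, j) = 0"
          by cases (simp_all add: lower later_rows less.prems that)
      qed (use less.prems in auto)
      finally show ?thesis .
    qed
    have "U $$ (i, i) * U $$ (i, i) = U $$ (i, i) * 1"
      using row_eq[of i] less.prems by simp
    then have "U $$ (i, i) = 0"
      using not_one less.prems by (simp add: mult_cancel_left)
    then show ?case using row_eq by auto
  qed
  then show ?thesis using \<open>j < d\<close> by blast
qed

lemma similar_upper_triangular_ones_first:
  fixes P :: "complex mat"
  assumes P: "P \<in> carrier_mat d d"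
  obtains r U V W where "r \<le> d" "U \<in> carrier_mat d d" "V \<in> carrier_mat d d" "W \<in> carrier_mat d d"
    and "V * W = 1\<^sub>m d" "W * V = 1\<^sub>m d" "P = V * U * W" "upper_triangular U"
    and "\<And>i. i < r \<Longrightarrow> U $$ (i, i) = 1" "\<And>i. r \<le> i \<Longrightarrow> i < d \<Longrightarrow> U $$ (i, i) \<noteq> 1"
proof -
  obtain es where es: "char_poly P = (\<Prod>a\<leftarrow>es. [:- a, 1:])"
    using char_poly_factorized[OF P] by auto
  define ones where "ones = filter (\<lambda>a. a = 1) es"
  define others where "others = filter (\<lambda>a. a \<noteq> 1) es"
  define r where "r = length ones"
  have "prod_list (map f (filter (\<lambda>a. a = 1) xs)) * prod_list (map f (filter (\<lambda>a. a \<noteq> 1) xs))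
      = prod_list (map f xs)" for f :: "complex \<Rightarrow> complex poly" and xs
    by (induct xs) (auto simp: ac_simps)
  then have cp: "char_poly P = (\<Prod>a\<leftarrow>ones @ others. [:- a, 1:])"
    using es unfolding ones_def others_def by simp
  obtain U V W where sd: "schur_decomposition P (ones @ others) = (U, V, W)"
    by (cases "schur_decomposition P (ones @ others)") auto
  from schur_decomposition[OF P cp sd] have sim: "similar_mat_wit P U V W"
    and ut: "upper_triangular U" and diag: "diag_mat U = ones @ others"
    by auto
  from sim P have U: "U \<in> carrier_mat d d"
    unfolding similar_mat_wit_def Let_def by auto
  have len: "length (ones @ others) = d"
    using arg_cong[OF diag, of length] U by (simp add: diag_mat_def)
  have diag_entry: "U $$ (i, i) = (ones @ others) ! i" if "i < d" for i
    using arg_cong[OF diag, of "\<lambda>xs. xs ! i"] U that by (simp add: diag_mat_def)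
  have "r \<le> d" using len r_def by simp
  moreover have "U $$ (i, i) = 1" if "i < r" for i
    using diag_entry[of i] nth_mem[of i ones] that \<open>r \<le> d\<close>
    by (simp add: r_def nth_append ones_def)
  moreover have "U $$ (i, i) \<noteq> 1" if "r \<le> i" "i < d" for i
    using diag_entry[of i] nth_mem[of "i - r" others] that len
    by (simp add: r_def nth_append others_def)
  ultimately show ?thesis
    using that sim P ut unfolding similar_mat_wit_def Let_def by auto
qed

lemma idempotent_similar_block_form:
  fixes P :: "complex mat"
  assumes P: "P \<in> carrier_mat d d" and idem: "P * P = P"
  obtains r U V W where "r \<le> d" "U \<in> carrier_mat d d" "V \<in> carrier_mat d d" "W \<in> carrier_mat d d"
    and "V * W = 1\<^sub>m d" "W * V = 1\<^sub>m d" "P = V * U * W"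
    and "\<And>i j. i < d \<Longrightarrow> j < r \<Longrightarrow> U $$ (i, j) = (if i = j then 1 else 0)"
    and "\<And>i j. r \<le> i \<Longrightarrow> i < d \<Longrightarrow> j < d \<Longrightarrow> U $$ (i, j) = 0"
proof -
  obtain r U V W where "r \<le> d" and U: "U \<in> carrier_mat d d" and V: "V \<in> carrier_mat d d"
    and W: "W \<in> carrier_mat d d" and VW: "V * W = 1\<^sub>m d" and WV: "W * V = 1\<^sub>m d"
    and P_eq: "P = V * U * W" and ut: "upper_triangular U"
    and one: "\<And>i. i < r \<Longrightarrow> U $$ (i, i) = 1" and not_one: "\<And>i. r \<le> i \<Longrightarrow> i < d \<Longrightarrow> U $$ (i, i) \<noteq> 1"
    using similar_upper_triangular_ones_first[OF P] by blast
  have assoc: "\<And>A B C :: complex mat. A \<in> carrier_mat d d \<Longrightarrow> B \<in> carrier_mat d d \<Longrightarrow>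
      C \<in> carrier_mat d d \<Longrightarrow> A * B * C = A * (B * C)"
    by (rule assoc_mult_mat)
  have cancel: "\<And>A. A \<in> carrier_mat d d \<Longrightarrow> W * (V * A) = A"
    "\<And>A. A \<in> carrier_mat d d \<Longrightarrow> V * (W * A) = A"
    "\<And>A. A \<in> carrier_mat d d \<Longrightarrow> P * (P * A) = P * A"
    using assoc[OF W V] assoc[OF V W] assoc[OF P P] WV VW idem by auto
  have "U = W * P * V"
    unfolding P_eq using U V W WV by (simp add: assoc cancel)
  then have U_idem: "U * U = U"
    using P V W VW by (simp add: assoc cancel)
  show ?thesis
    by (rule that[OF \<open>r \<le> d\<close> U V W VW WV P_eq
          upper_triangular_idempotent_first_columns[OF U ut U_idem \<open>r \<le> d\<close> one]
          upper_triangular_idempotent_last_rows[OF U ut U_idem not_one]])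
qed

lemma lower_left_zero_if_commutes_with_block:
  fixes U M :: "'a :: comm_ring_1 mat"
  assumes U: "U \<in> carrier_mat d d" and M: "M \<in> carrier_mat d d" and comm: "M * U = U * M"
    and cols: "\<And>i j. i < d \<Longrightarrow> j < r \<Longrightarrow> U $$ (i, j) = (if i = j then 1 else 0)"
    and rows: "\<And>i j. r \<le> i \<Longrightarrow> i < d \<Longrightarrow> j < d \<Longrightarrow> U $$ (i, j) = 0"
    and ij: "r \<le> i" "i < d" "j < r"
  shows "M $$ (i, j) = 0"
proof -
  have "(M * U) $$ (i, j) = (\<Sum>l<d. M $$ (i, l) * U $$ (l, j))"
    using U M ij by (intro index_mult_mat_sum[of _ d d _ d]) auto
  also have "\<dots> = M $$ (i, j)"
    using cols ij by (subst sum_eq_single[of _ j]) auto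
  finally have "(M * U) $$ (i, j) = M $$ (i, j)" .
  moreover have "(U * M) $$ (i, j) = (\<Sum>l<d. U $$ (i, l) * M $$ (l, j))"
    using U M ij by (intro index_mult_mat_sum[of _ d d _ d]) auto
  moreover have "\<dots> = 0"
    using rows ij by simp
  ultimately show ?thesis using comm by simp
qed

lemma mat_trace_block_mult:
  fixes U M :: "complex mat"
  assumes U: "U \<in> carrier_mat d d" and M: "M \<in> carrier_mat d d" and "r \<le> d"
    and cols: "\<And>i j. i < d \<Longrightarrow> j < r \<Longrightarrow> U $$ (i, j) = (if i = j then 1 else 0)"
    and rows: "\<And>i j. r \<le> i \<Longrightarrow> i < d \<Longrightarrow> j < d \<Longrightarrow> U $$ (i, j) = 0"
    and lower_left: "\<And>i j. r \<le> i \<Longrightarrow> i < d \<Longrightarrow> j < r \<Longrightarrow> M $$ (i, j) = 0"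
  shows "mat_trace (U * M) = (\<Sum>i<r. M $$ (i, i))"
proof -
  have diag: "(U * M) $$ (i, i) = (if i < r then M $$ (i, i) else 0)" if "i < d" for i
  proof -
    have "(U * M) $$ (i, i) = (\<Sum>l<d. U $$ (i, l) * M $$ (l, i))"
      using U M that by (intro index_mult_mat_sum) auto
    also have "\<dots> = (if i < r then M $$ (i, i) else 0)"
    proof (cases "i < r")
      case True
      have "(\<Sum>l<d. U $$ (i, l) * M $$ (l, i)) = U $$ (i, i) * M $$ (i, i)"
      proof (rule sum_eq_single)
        fix l assume "l \<in> {..<d}" "l \<noteq> i"
        then show "U $$ (i, l) * M $$ (l, i) = 0"
          using cols lower_left True that by (cases "l < r") auto
      qed (use that in auto)
      then show ?thesis using cols True that by simp
    qed (use rows that in simp)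
    finally show ?thesis .
  qed
  have "mat_trace (U * M) = (\<Sum>i<d. if i < r then M $$ (i, i) else 0)"
    using U diag by (simp add: mat_trace_def)
  also have "\<dots> = (\<Sum>i<r. M $$ (i, i))"
    using \<open>r \<le> d\<close> by (intro sum.mono_neutral_cong_right) auto
  finally show ?thesis .
qed

lemma corner_mult:
  fixes A B :: "'a :: comm_ring_1 mat"
  assumes A: "A \<in> carrier_mat d d" and B: "B \<in> carrier_mat d d" and "r \<le> d"
    and lower_left: "\<And>i j. r \<le> i \<Longrightarrow> i < d \<Longrightarrow> j < r \<Longrightarrow> B $$ (i, j) = 0"
  shows "mat r r (\<lambda>ij. (A * B) $$ ij) = mat r r (\<lambda>ij. A $$ ij) * mat r r (\<lambda>ij. B $$ ij)"
proof (rule eq_matI)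
  fix i j assume "i < dim_row (mat r r (\<lambda>ij. A $$ ij) * mat r r (\<lambda>ij. B $$ ij))"
    "j < dim_col (mat r r (\<lambda>ij. A $$ ij) * mat r r (\<lambda>ij. B $$ ij))"
  then have ij: "i < r" "j < r" by auto
  have "(A * B) $$ (i, j) = (\<Sum>l<d. A $$ (i, l) * B $$ (l, j))"
    using A B ij \<open>r \<le> d\<close> by (intro index_mult_mat_sum[of _ d d _ d]) auto
  also have "\<dots> = (\<Sum>l<r. A $$ (i, l) * B $$ (l, j))"
    using lower_left ij \<open>r \<le> d\<close> by (intro sum.mono_neutral_right) auto
  also have "\<dots> = (mat r r (\<lambda>ij. A $$ ij) * mat r r (\<lambda>ij. B $$ ij)) $$ (i, j)"
    using ij by (subst index_mult_mat_sum[of _ r r _ r]) auto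
  finally show "mat r r (\<lambda>ij. (A * B) $$ ij) $$ (i, j) = (mat r r (\<lambda>ij. A $$ ij) * mat r r (\<lambda>ij. B $$ ij)) $$ (i, j)"
    using ij by simp
qed auto

lemma is_rep_subset: "is_rep G K n \<rho> \<Longrightarrow> L \<subseteq> K \<Longrightarrow> is_rep G L n \<rho>"
  by (auto simp: is_rep_def)

lemma is_rep_similar:
  assumes rep: "is_rep G T d \<sigma>" and V: "V \<in> carrier_mat d d" and W: "W \<in> carrier_mat d d"
    and VW: "V * W = 1\<^sub>m d" and WV: "W * V = 1\<^sub>m d"
  shows "is_rep G T d (\<lambda>t. W * \<sigma> t * V)"
  unfolding is_rep_def
proof (intro conjI ballI)
  have \<sigma>: "\<And>t. t \<in> T \<Longrightarrow> \<sigma> t \<in> carrier_mat d d" and \<sigma>_one: "\<sigma> \<one>\<^bsub>G\<^esub> = 1\<^sub>m d"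
    and \<sigma>_mult: "\<And>g h. g \<in> T \<Longrightarrow> h \<in> T \<Longrightarrow> \<sigma> (g \<otimes>\<^bsub>G\<^esub> h) = \<sigma> g * \<sigma> h"
    using rep unfolding is_rep_def by auto
  show "W * \<sigma> t * V \<in> carrier_mat d d" if "t \<in> T" for t
    using \<sigma>[OF that] V W by auto
  show "W * \<sigma> \<one>\<^bsub>G\<^esub> * V = 1\<^sub>m d"
    using W WV by (simp add: \<sigma>_one)
  fix g h assume g: "g \<in> T" and h: "h \<in> T"
  have "W * \<sigma> g * V * (W * \<sigma> h * V) = W * \<sigma> g * (V * W) * \<sigma> h * V"
    using \<sigma>[OF g] \<sigma>[OF h] V W by (simp add: assoc_mult_mat[of _ d d _ d _ d])
  then show "W * \<sigma> (g \<otimes>\<^bsub>G\<^esub> h) * V = W * \<sigma> g * V * (W * \<sigma> h * V)"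
    using \<sigma>[OF g] \<sigma>[OF h] W VW by (simp add: \<sigma>_mult[OF g h] assoc_mult_mat[of _ d d _ d _ d])
qed

lemma is_rep_corner:
  assumes rep: "is_rep G T d M" and "r \<le> d"
    and lower_left: "\<And>t i j. t \<in> T \<Longrightarrow> r \<le> i \<Longrightarrow> i < d \<Longrightarrow> j < r \<Longrightarrow> M t $$ (i, j) = 0"
  shows "is_rep G T r (\<lambda>t. mat r r (\<lambda>ij. M t $$ ij))"
  unfolding is_rep_def
proof (intro conjI ballI)
  have M: "\<And>t. t \<in> T \<Longrightarrow> M t \<in> carrier_mat d d" and M_one: "M \<one>\<^bsub>G\<^esub> = 1\<^sub>m d"
    and M_mult: "\<And>g h. g \<in> T \<Longrightarrow> h \<in> T \<Longrightarrow> M (g \<otimes>\<^bsub>G\<^esub> h) = M g * M h"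
    using rep unfolding is_rep_def by auto
  show "mat r r (\<lambda>ij. M \<one>\<^bsub>G\<^esub> $$ ij) = 1\<^sub>m r"
    using \<open>r \<le> d\<close> by (intro eq_matI) (auto simp: M_one)
  fix g h assume g: "g \<in> T" and h: "h \<in> T"
  show "mat r r (\<lambda>ij. M (g \<otimes>\<^bsub>G\<^esub> h) $$ ij) = mat r r (\<lambda>ij. M g $$ ij) * mat r r (\<lambda>ij. M h $$ ij)"
    unfolding M_mult[OF g h] using corner_mult[OF M[OF g] M[OF h] \<open>r \<le> d\<close>] lower_left h by simp
qed simp

text \<open>Conjugating \<open>P\<close> to the block form \<open>[[1, B], [0, 0]]\<close> makes every \<open>\<sigma> t\<close> block upper triangular;
  the upper left block is the subrepresentation on the image of \<open>P\<close>.\<close>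
lemma is_rep_from_commuting_idempotent:
  fixes \<sigma> :: "'a \<Rightarrow> complex mat"
  assumes rep: "is_rep G T d \<sigma>" and P: "P \<in> carrier_mat d d" and idem: "P * P = P"
    and comm: "\<And>t. t \<in> T \<Longrightarrow> \<sigma> t * P = P * \<sigma> t"
  obtains r \<rho> where "is_rep G T r \<rho>" and "\<And>t. t \<in> T \<Longrightarrow> mat_trace (\<rho> t) = mat_trace (P * \<sigma> t)"
proof -
  have \<sigma>: "\<And>t. t \<in> T \<Longrightarrow> \<sigma> t \<in> carrier_mat d d"
    using rep unfolding is_rep_def by auto
  obtain r U V W where "r \<le> d" and U: "U \<in> carrier_mat d d" and V: "V \<in> carrier_mat d d"
    and W: "W \<in> carrier_mat d d" and VW: "V * W = 1\<^sub>m d" and WV: "W * V = 1\<^sub>m d"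
    and P_eq: "P = V * U * W"
    and cols: "\<And>i j. i < d \<Longrightarrow> j < r \<Longrightarrow> U $$ (i, j) = (if i = j then 1 else 0)"
    and rows: "\<And>i j. r \<le> i \<Longrightarrow> i < d \<Longrightarrow> j < d \<Longrightarrow> U $$ (i, j) = 0"
    using idempotent_similar_block_form[OF P idem] by blast
  have assoc: "\<And>A B C :: complex mat. A \<in> carrier_mat d d \<Longrightarrow> B \<in> carrier_mat d d \<Longrightarrow>
      C \<in> carrier_mat d d \<Longrightarrow> A * B * C = A * (B * C)"
    by (rule assoc_mult_mat)
  have cancel: "\<And>A. A \<in> carrier_mat d d \<Longrightarrow> W * (V * A) = A"
    "\<And>A. A \<in> carrier_mat d d \<Longrightarrow> V * (W * A) = A"
    using assoc[OF W V] assoc[OF V W] WV VW by auto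
  have U_eq: "U = W * P * V"
    unfolding P_eq using U V W WV by (simp add: assoc cancel)
  define M where "M t = W * \<sigma> t * V" for t
  have M: "M t \<in> carrier_mat d d" if "t \<in> T" for t
    unfolding M_def using \<sigma> that V W by auto
  have M_U: "M t * U = U * M t" if t: "t \<in> T" for t
  proof -
    have "M t * U = W * (\<sigma> t * P) * V"
      unfolding M_def U_eq using \<sigma>[OF t] P V W by (simp add: assoc cancel)
    also have "\<dots> = W * (P * \<sigma> t) * V" using comm t by simp
    also have "\<dots> = U * M t"
      unfolding M_def U_eq using \<sigma>[OF t] P V W by (simp add: assoc cancel)
    finally show ?thesis .
  qed
  have lower_left: "M t $$ (i, j) = 0" if "t \<in> T" "r \<le> i" "i < d" "j < r" for t i j
    using lower_left_zero_if_commutes_with_block[OF U M[OF that(1)] M_U[OF that(1)] cols rows that(2-4)] .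
  have "is_rep G T r (\<lambda>t. mat r r (\<lambda>ij. M t $$ ij))"
    using is_rep_corner[OF is_rep_similar[OF rep V W VW WV] \<open>r \<le> d\<close>] lower_left
    unfolding M_def by blast
  moreover have "mat_trace (mat r r (\<lambda>ij. M t $$ ij)) = mat_trace (P * \<sigma> t)" if t: "t \<in> T" for t
  proof -
    have "mat_trace (P * \<sigma> t) = mat_trace (V * (U * W * \<sigma> t))"
      unfolding P_eq using \<sigma>[OF t] U V W by (simp add: assoc)
    also have "\<dots> = mat_trace (U * W * \<sigma> t * V)"
      using \<sigma>[OF t] U V W by (intro mat_trace_mult_comm[of _ d d]) auto
    also have "U * W * \<sigma> t * V = U * M t"
      unfolding M_def using \<sigma>[OF t] U V W by (simp add: assoc)
    also have "mat_trace (U * M t) = (\<Sum>i<r. M t $$ (i, i))"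
      using mat_trace_block_mult[OF U M[OF t] \<open>r \<le> d\<close> cols rows] lower_left t by blast
    finally show ?thesis by (simp add: mat_trace_def)
  qed
  ultimately show ?thesis using that by blast
qed

section \<open>Schur's lemma and the orthogonality relations\<close>

lemma intertwiner_injective_or_zero:
  assumes irr: "irr_rep G S m \<rho>2" and rep: "is_rep G S k \<rho>1" and A: "A \<in> carrier_mat k m"
    and comm: "\<And>g. g \<in> S \<Longrightarrow> \<rho>1 g * A = A * \<rho>2 g"
  shows "A = 0\<^sub>m k m \<or> (\<forall>v\<in>carrier_vec m. A *\<^sub>v v = 0\<^sub>v k \<longrightarrow> v = 0\<^sub>v m)"
proof -
  let ?N = "{v \<in> carrier_vec m. A *\<^sub>v v = 0\<^sub>v k}"
  have \<rho>1: "\<And>g. g \<in> S \<Longrightarrow> \<rho>1 g \<in> carrier_mat k k" and \<rho>2: "\<And>g. g \<in> S \<Longrightarrow> \<rho>2 g \<in> carrier_mat m m"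
    using rep irr by (auto simp: is_rep_def irr_rep_def)
  have "\<rho>2 g *\<^sub>v v \<in> ?N" if "g \<in> S" "v \<in> ?N" for g v
  proof -
    have v: "v \<in> carrier_vec m" using that by simp
    have "A *\<^sub>v (\<rho>2 g *\<^sub>v v) = (A * \<rho>2 g) *\<^sub>v v"
      using assoc_mult_mat_vec[OF A \<rho>2[OF that(1)] v] by simp
    also have "\<dots> = \<rho>1 g *\<^sub>v (A *\<^sub>v v)"
      using assoc_mult_mat_vec[OF \<rho>1[OF that(1)] A v] comm[OF that(1)] by simp
    finally show ?thesis
      using mult_mat_vec_carrier[OF \<rho>2[OF that(1)] v] \<rho>1[OF that(1)] that(2) by simp
  qed
  then have "?N = {0\<^sub>v m} \<or> ?N = carrier_vec m"
    using irr is_subspace_mat_kernel[OF A] unfolding irr_rep_def by blast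
  moreover have "A = 0\<^sub>m k m" if "?N = carrier_vec m"
    using that A by (intro mat_eq_if_mult_vec_eq) auto
  ultimately show ?thesis by auto
qed

lemma intertwiner_surjective_or_zero:
  assumes irr: "irr_rep G S k \<rho>1" and rep: "is_rep G S m \<rho>2" and A: "A \<in> carrier_mat k m"
    and comm: "\<And>g. g \<in> S \<Longrightarrow> \<rho>1 g * A = A * \<rho>2 g"
  shows "A = 0\<^sub>m k m \<or> (\<forall>w\<in>carrier_vec k. \<exists>v\<in>carrier_vec m. A *\<^sub>v v = w)"
proof -
  let ?W = "(*\<^sub>v) A ` carrier_vec m"
  have \<rho>1: "\<And>g. g \<in> S \<Longrightarrow> \<rho>1 g \<in> carrier_mat k k" and \<rho>2: "\<And>g. g \<in> S \<Longrightarrow> \<rho>2 g \<in> carrier_mat m m"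
    using rep irr by (auto simp: is_rep_def irr_rep_def)
  have "\<rho>1 g *\<^sub>v w \<in> ?W" if g: "g \<in> S" and w: "w \<in> ?W" for g w
  proof -
    obtain v where v: "v \<in> carrier_vec m" "w = A *\<^sub>v v" using w by blast
    have "\<rho>1 g *\<^sub>v w = (\<rho>1 g * A) *\<^sub>v v"
      using assoc_mult_mat_vec[OF \<rho>1[OF g] A v(1)] v(2) by simp
    also have "\<dots> = A *\<^sub>v (\<rho>2 g *\<^sub>v v)"
      using assoc_mult_mat_vec[OF A \<rho>2[OF g] v(1)] comm[OF g] by simp
    finally show ?thesis using mult_mat_vec_carrier[OF \<rho>2[OF g] v(1)] by blast
  qed
  then have "?W = {0\<^sub>v k} \<or> ?W = carrier_vec k"
    using irr is_subspace_mat_image[OF A] unfolding irr_rep_def by blast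
  moreover have "A = 0\<^sub>m k m" if "?W = {0\<^sub>v k}"
  proof (rule mat_eq_if_mult_vec_eq[OF A])
    fix v :: "complex vec" assume "v \<in> carrier_vec m"
    then have "A *\<^sub>v v \<in> ?W" by blast
    then show "A *\<^sub>v v = 0\<^sub>m k m *\<^sub>v v" using that \<open>v \<in> carrier_vec m\<close> by simp
  qed simp
  moreover have "\<exists>v\<in>carrier_vec m. A *\<^sub>v v = w" if "?W = carrier_vec k" "w \<in> carrier_vec k" for w
  proof -
    have "w \<in> ?W" using that by simp
    then show ?thesis by auto
  qed
  ultimately show ?thesis by blast
qed

lemma irr_rep_intertwiner_trace_eq:
  assumes irr1: "irr_rep G S k \<rho>1" and irr2: "irr_rep G S m \<rho>2" and A: "A \<in> carrier_mat k m"
    and comm: "\<And>g. g \<in> S \<Longrightarrow> \<rho>1 g * A = A * \<rho>2 g" and nonzero: "A \<noteq> 0\<^sub>m k m"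
    and g: "g \<in> S"
  shows "mat_trace (\<rho>1 g) = mat_trace (\<rho>2 g)"
proof -
  have rep1: "is_rep G S k \<rho>1" and rep2: "is_rep G S m \<rho>2"
    using irr1 irr2 by (auto simp: irr_rep_def)
  have \<rho>1: "\<rho>1 g \<in> carrier_mat k k" and \<rho>2: "\<rho>2 g \<in> carrier_mat m m"
    using rep1 rep2 g by (auto simp: is_rep_def)
  obtain B where B: "B \<in> carrier_mat m k" and AB: "A * B = 1\<^sub>m k" and BA: "B * A = 1\<^sub>m m"
    using mat_inverse_if_bij[OF A] nonzero
      intertwiner_injective_or_zero[OF irr2 rep1 A comm] intertwiner_surjective_or_zero[OF irr1 rep2 A comm]
    by metis
  have "mat_trace (\<rho>1 g) = mat_trace (\<rho>1 g * A * B)"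
    using \<rho>1 A B AB by (simp add: assoc_mult_mat[OF \<rho>1 A B])
  also have "\<dots> = mat_trace (A * \<rho>2 g * B)"
    using comm[OF g] by simp
  also have "\<dots> = mat_trace (B * (A * \<rho>2 g))"
    using A B \<rho>2 by (intro mat_trace_mult_comm[of _ k m]) auto
  also have "\<dots> = mat_trace (\<rho>2 g)"
    using \<rho>2 A B BA by (simp add: assoc_mult_mat[OF B A \<rho>2, symmetric])
  finally show ?thesis .
qed

lemma irr_rep_commutant_scalar:
  fixes A :: "complex mat"
  assumes irr: "irr_rep G S m \<rho>" and A: "A \<in> carrier_mat m m"
    and comm: "\<And>g. g \<in> S \<Longrightarrow> A * \<rho> g = \<rho> g * A"
  obtains c where "A = c \<cdot>\<^sub>m 1\<^sub>m m"
proof -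
  have rep: "is_rep G S m \<rho>" and "m > 0"
    and \<rho>: "\<And>g. g \<in> S \<Longrightarrow> \<rho> g \<in> carrier_mat m m"
    using irr by (auto simp: irr_rep_def is_rep_def)
  have "Polynomial.degree (char_poly A) = m"
    using degree_monic_char_poly[OF A] by auto
  then obtain c where "poly (char_poly A) c = 0"
    using \<open>m > 0\<close> alg_closed_imp_poly_has_root by force
  then have "eigenvalue A c"
    using eigenvalue_root_char_poly[OF A] by auto
  then obtain v where v: "v \<in> carrier_vec m" "v \<noteq> 0\<^sub>v m" "char_matrix A c *\<^sub>v v = 0\<^sub>v m"
    using eigenvalue_char_matrix[OF A] by auto
  have C: "char_matrix A c \<in> carrier_mat m m" using A by simp
  have "\<rho> g * char_matrix A c = char_matrix A c * \<rho> g" if "g \<in> S" for g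
    using A \<rho>[OF that] comm[OF that] mult_smult_distrib[OF \<rho>[OF that] one_carrier_mat]
      mult_smult_assoc_mat[OF one_carrier_mat \<rho>[OF that]]
    by (simp add: char_matrix_def mult_add_distrib_mat add_mult_distrib_mat)
  then have zero: "char_matrix A c = 0\<^sub>m m m"
    using intertwiner_injective_or_zero[OF irr rep C] v by auto
  have "A = c \<cdot>\<^sub>m 1\<^sub>m m"
  proof (rule eq_matI)
    fix i j assume "i < dim_row (c \<cdot>\<^sub>m 1\<^sub>m m)" "j < dim_col (c \<cdot>\<^sub>m (1\<^sub>m m :: complex mat))"
    then have ij: "i < m" "j < m" by auto
    have "char_matrix A c $$ (i, j) = 0" using zero ij by simp
    then show "A $$ (i, j) = (c \<cdot>\<^sub>m 1\<^sub>m m) $$ (i, j)"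
      using A ij by (cases "i = j") (auto simp: char_matrix_def algebra_simps)
  qed (use A in auto)
  then show ?thesis using that by blast
qed

context group
begin

lemma inv_mult_cancel_left [simp]: "x \<in> carrier G \<Longrightarrow> y \<in> carrier G \<Longrightarrow> inv x \<otimes> (x \<otimes> y) = y"
  using m_assoc[of "inv x" x y] by simp

lemma mult_inv_cancel_left [simp]: "x \<in> carrier G \<Longrightarrow> y \<in> carrier G \<Longrightarrow> x \<otimes> (inv x \<otimes> y) = y"
  using m_assoc[of x "inv x" y] by simp

lemma conj_bij_betw:
  assumes "K \<subseteq> carrier G" "t \<in> carrier G"
    and "\<And>k. k \<in> K \<Longrightarrow> inv t \<otimes> k \<otimes> t \<in> K" "\<And>k. k \<in> K \<Longrightarrow> t \<otimes> k \<otimes> inv t \<in> K"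
  shows "bij_betw (\<lambda>k. inv t \<otimes> k \<otimes> t) K K"
proof (rule bij_betwI[where g = "\<lambda>k. t \<otimes> k \<otimes> inv t"])
  fix k assume "k \<in> K"
  then have "k \<in> carrier G" using assms(1) by blast
  then show "t \<otimes> (inv t \<otimes> k \<otimes> t) \<otimes> inv t = k" "inv t \<otimes> (t \<otimes> k \<otimes> inv t) \<otimes> t = k"
    using assms(2) by (simp_all add: m_assoc)
qed (use assms in auto)

lemma normal_conj_bij_betw: "S \<lhd> G \<Longrightarrow> t \<in> carrier G \<Longrightarrow> bij_betw (\<lambda>s. inv t \<otimes> s \<otimes> t) S S"
  by (rule conj_bij_betw) (auto dest: normal.inv_op_closed1 normal.inv_op_closed2 normal_imp_subgroup subgroup.subset)

lemma subgroup_left_mult_bij_betw: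
  assumes "subgroup S G" "a \<in> S"
  shows "bij_betw (\<lambda>c. inv a \<otimes> c) S S"
proof -
  interpret subgroup S G by fact
  show ?thesis
    by (rule bij_betwI[where g = "\<lambda>c. a \<otimes> c"]) (use assms subset in auto)
qed

lemma is_rep_inv_mult:
  assumes K: "subgroup K G" and rep: "is_rep G K n \<rho>" and g: "g \<in> K"
  shows "\<rho> (inv g) * \<rho> g = 1\<^sub>m n"
proof -
  have "inv g \<in> K" "g \<in> carrier G"
    using g subgroup.m_inv_closed[OF K] subgroup.subset[OF K] by auto
  moreover have "\<And>a b. a \<in> K \<Longrightarrow> b \<in> K \<Longrightarrow> \<rho> (a \<otimes> b) = \<rho> a * \<rho> b"
    using rep unfolding is_rep_def by blast
  ultimately have "\<rho> (inv g) * \<rho> g = \<rho> (inv g \<otimes> g)"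
    using g by metis
  also have "\<dots> = \<rho> \<one>"
    using l_inv[OF \<open>g \<in> carrier G\<close>] by (rule arg_cong)
  also have "\<dots> = 1\<^sub>m n"
    using rep unfolding is_rep_def by blast
  finally show ?thesis .
qed

lemma rep_trace_conj:
  assumes K: "subgroup K G" and rep: "is_rep G K n \<rho>" and g: "g \<in> K" and h: "h \<in> K"
  shows "mat_trace (\<rho> (g \<otimes> h \<otimes> inv g)) = mat_trace (\<rho> h)"
proof -
  have \<rho>: "\<And>a. a \<in> K \<Longrightarrow> \<rho> a \<in> carrier_mat n n"
    and mult: "\<And>a b. a \<in> K \<Longrightarrow> b \<in> K \<Longrightarrow> \<rho> (a \<otimes> b) = \<rho> a * \<rho> b"
    using rep by (auto simp: is_rep_def)
  have gh: "g \<otimes> h \<in> K" and g': "inv g \<in> K"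
    using g h subgroup.m_closed[OF K] subgroup.m_inv_closed[OF K] by auto
  have "\<rho> (g \<otimes> h \<otimes> inv g) = \<rho> g * \<rho> h * \<rho> (inv g)"
    unfolding mult[OF gh g'] mult[OF g h] ..
  then have "mat_trace (\<rho> (g \<otimes> h \<otimes> inv g)) = mat_trace ((\<rho> g * \<rho> h) * \<rho> (inv g))"
    by (rule arg_cong)
  also have "\<dots> = mat_trace (\<rho> (inv g) * (\<rho> g * \<rho> h))"
    using \<rho>[OF g] \<rho>[OF h] \<rho>[OF g'] by (intro mat_trace_mult_comm[of _ n n]) auto
  also have "\<rho> (inv g) * (\<rho> g * \<rho> h) = (\<rho> (inv g) * \<rho> g) * \<rho> h"
    using \<rho>[OF g] \<rho>[OF h] \<rho>[OF g'] by (intro assoc_mult_mat[symmetric]) auto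
  also have "\<rho> (inv g) * \<rho> g = 1\<^sub>m n"
    using K rep g by (rule is_rep_inv_mult)
  finally show ?thesis using \<rho>[OF h] by simp
qed

lemma irr_rep_conj:
  assumes N: "S \<lhd> G" and x: "x \<in> carrier G" and irr: "irr_rep G S m \<rho>"
  shows "irr_rep G S m (\<lambda>s. \<rho> (inv x \<otimes> s \<otimes> x))"
proof -
  interpret N: normal S G by fact
  have rep: "is_rep G S m \<rho>" and "m > 0"
    and invariant: "\<And>W. is_subspace m W \<Longrightarrow> (\<forall>g\<in>S. \<forall>w\<in>W. \<rho> g *\<^sub>v w \<in> W) \<Longrightarrow> W = {0\<^sub>v m} \<or> W = carrier_vec m"
    using irr unfolding irr_rep_def by auto
  have conj_S: "\<And>s. s \<in> S \<Longrightarrow> inv x \<otimes> s \<otimes> x \<in> S"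
    using N.inv_op_closed1 x by auto
  have S_carrier: "\<And>s. s \<in> S \<Longrightarrow> s \<in> carrier G"
    using N.subset by blast
  have rep_conj: "is_rep G S m (\<lambda>s. \<rho> (inv x \<otimes> s \<otimes> x))"
    unfolding is_rep_def
  proof (intro conjI ballI)
    fix g h assume g: "g \<in> S" and h: "h \<in> S"
    have "inv x \<otimes> (g \<otimes> h) \<otimes> x = (inv x \<otimes> g \<otimes> x) \<otimes> (inv x \<otimes> h \<otimes> x)"
      using x S_carrier[OF g] S_carrier[OF h] by (simp add: m_assoc)
    then show "\<rho> (inv x \<otimes> (g \<otimes> h) \<otimes> x) = \<rho> (inv x \<otimes> g \<otimes> x) * \<rho> (inv x \<otimes> h \<otimes> x)"
      using rep conj_S g h by (simp add: is_rep_def)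
  qed (use rep conj_S x in \<open>auto simp: is_rep_def\<close>)
  have irreducible: "W = {0\<^sub>v m} \<or> W = carrier_vec m"
    if "is_subspace m W" "\<forall>g\<in>S. \<forall>w\<in>W. \<rho> (inv x \<otimes> g \<otimes> x) *\<^sub>v w \<in> W" for W
  proof (rule invariant[OF that(1)], intro ballI)
    fix g w assume g: "g \<in> S" and w: "w \<in> W"
    have "\<rho> (inv x \<otimes> (x \<otimes> g \<otimes> inv x) \<otimes> x) *\<^sub>v w \<in> W"
      using that(2) N.inv_op_closed2[OF x g] w by blast
    moreover have "inv x \<otimes> (x \<otimes> g \<otimes> inv x) \<otimes> x = g"
      using x S_carrier[OF g] by (simp add: m_assoc)
    ultimately show "\<rho> g *\<^sub>v w \<in> W" by simp
  qed
  show ?thesis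
    unfolding irr_rep_def using rep_conj \<open>m > 0\<close> irreducible by blast
qed

lemma rep_average_intertwines:
  assumes S: "subgroup S G" and rep1: "is_rep G S k \<rho>1" and rep2: "is_rep G S m \<rho>2"
    and E: "E \<in> carrier_mat k m" and b: "b \<in> S"
  shows "\<rho>1 b * mat_sum k m S (\<lambda>a. \<rho>1 a * E * \<rho>2 (inv a))
    = mat_sum k m S (\<lambda>a. \<rho>1 a * E * \<rho>2 (inv a)) * \<rho>2 b"
proof -
  interpret subgroup S G by fact
  have \<rho>1: "\<And>g. g \<in> S \<Longrightarrow> \<rho>1 g \<in> carrier_mat k k"
    and mult1: "\<And>g h. g \<in> S \<Longrightarrow> h \<in> S \<Longrightarrow> \<rho>1 (g \<otimes> h) = \<rho>1 g * \<rho>1 h"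
    using rep1 unfolding is_rep_def by auto
  have \<rho>2: "\<And>g. g \<in> S \<Longrightarrow> \<rho>2 g \<in> carrier_mat m m"
    and mult2: "\<And>g h. g \<in> S \<Longrightarrow> h \<in> S \<Longrightarrow> \<rho>2 (g \<otimes> h) = \<rho>2 g * \<rho>2 h"
    using rep2 unfolding is_rep_def by auto
  have summand: "\<And>a. a \<in> S \<Longrightarrow> \<rho>1 a * E * \<rho>2 (inv a) \<in> carrier_mat k m"
    using \<rho>1 \<rho>2 E by (meson m_inv_closed mult_carrier_mat)
  have "\<rho>1 b * mat_sum k m S (\<lambda>a. \<rho>1 a * E * \<rho>2 (inv a))
      = mat_sum k m S (\<lambda>a. \<rho>1 b * (\<rho>1 a * E * \<rho>2 (inv a)))"
    by (rule mult_mat_sum[OF \<rho>1[OF b] summand])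
  also have "\<dots> = mat_sum k m S (\<lambda>a. \<rho>1 (b \<otimes> a) * E * \<rho>2 (inv a))"
  proof (rule mat_sum_cong)
    fix a assume a: "a \<in> S"
    show "\<rho>1 b * (\<rho>1 a * E * \<rho>2 (inv a)) = \<rho>1 (b \<otimes> a) * E * \<rho>2 (inv a)"
      unfolding mult1[OF b a] by (rule mult_mat_assoc4[OF \<rho>1[OF b] \<rho>1[OF a] E \<rho>2[OF m_inv_closed[OF a]]])
  qed
  also have "\<dots> = mat_sum k m S (\<lambda>a. \<rho>1 (b \<otimes> (inv b \<otimes> a)) * E * \<rho>2 (inv (inv b \<otimes> a)))"
    by (rule mat_sum_reindex[OF subgroup_left_mult_bij_betw[OF S b]])
  also have "\<dots> = mat_sum k m S (\<lambda>a. \<rho>1 a * E * \<rho>2 (inv a) * \<rho>2 b)"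
  proof (rule mat_sum_cong)
    fix a assume a: "a \<in> S"
    have "b \<otimes> (inv b \<otimes> a) = a" "inv (inv b \<otimes> a) = inv a \<otimes> b"
      using a b subset by (auto simp: inv_mult_group)
    moreover have "\<rho>1 a * E * (\<rho>2 (inv a) * \<rho>2 b) = \<rho>1 a * E * \<rho>2 (inv a) * \<rho>2 b"
      using \<rho>1[OF a] E \<rho>2[OF m_inv_closed[OF a]] \<rho>2[OF b] by (intro assoc_mult_mat[symmetric]) auto
    ultimately show "\<rho>1 (b \<otimes> (inv b \<otimes> a)) * E * \<rho>2 (inv (inv b \<otimes> a)) = \<rho>1 a * E * \<rho>2 (inv a) * \<rho>2 b"
      using mult2[OF m_inv_closed[OF a] b] by simp
  qed
  also have "\<dots> = mat_sum k m S (\<lambda>a. \<rho>1 a * E * \<rho>2 (inv a)) * \<rho>2 b"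
    by (rule mat_sum_mult[OF \<rho>2[OF b] summand, symmetric])
  finally show ?thesis .
qed

lemma index_rep_average_single_entry:
  assumes S: "subgroup S G" and rep1: "is_rep G S k \<rho>1" and rep2: "is_rep G S m \<rho>2"
    and "i < k" "j < m" "p < k" "q < m"
  shows "mat_sum k m S (\<lambda>a. \<rho>1 a * mat k m (\<lambda>(r, s). if r = i \<and> s = j then 1 else 0) * \<rho>2 (inv a)) $$ (p, q)
    = (\<Sum>a\<in>S. \<rho>1 a $$ (p, i) * \<rho>2 (inv a) $$ (j, q))"
proof -
  have \<rho>1: "\<And>g. g \<in> S \<Longrightarrow> \<rho>1 g \<in> carrier_mat k k" and \<rho>2: "\<And>g. g \<in> S \<Longrightarrow> \<rho>2 g \<in> carrier_mat m m"
    using rep1 rep2 unfolding is_rep_def by auto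
  show ?thesis
    using assms(4-7) by (simp, intro sum.cong refl index_mult_single_entry_mult
        \<rho>1 \<rho>2 subgroup.m_inv_closed[OF S])
qed

lemma irr_rep_orthogonality:
  assumes S: "subgroup S G" and irr: "irr_rep G S m \<rho>"
    and ijpq: "p < m" "i < m" "j < m" "q < m"
  shows "(\<Sum>a\<in>S. \<rho> a $$ (p, i) * \<rho> (inv a) $$ (j, q))
    = (if p = q \<and> i = j then of_nat (card S) / of_nat m else 0)"
proof -
  interpret subgroup S G by fact
  have rep: "is_rep G S m \<rho>" and "m > 0" using irr unfolding irr_rep_def by auto
  have \<rho>: "\<And>g. g \<in> S \<Longrightarrow> \<rho> g \<in> carrier_mat m m" using rep unfolding is_rep_def by auto
  define E where "E = mat m m (\<lambda>(r, s). if r = i \<and> s = j then (1 :: complex) else 0)"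
  have E: "E \<in> carrier_mat m m" unfolding E_def by auto
  define A where "A = mat_sum m m S (\<lambda>a. \<rho> a * E * \<rho> (inv a))"
  have A: "A \<in> carrier_mat m m" unfolding A_def by simp
  have "A * \<rho> g = \<rho> g * A" if "g \<in> S" for g
    using rep_average_intertwines[OF S rep rep E that] unfolding A_def by simp
  then obtain c where c: "A = c \<cdot>\<^sub>m 1\<^sub>m m"
    using irr_rep_commutant_scalar[OF irr A] by blast
  have trace_E: "mat_trace E = (if i = j then 1 else 0)"
    unfolding mat_trace_def E_def using ijpq by (simp add: sum.delta'[of "{..<m}"] cong: if_cong)
  have "mat_trace A = (\<Sum>a\<in>S. mat_trace (\<rho> a * E * \<rho> (inv a)))"
    unfolding A_def using \<rho> E by (intro mat_trace_mat_sum) (auto intro!: mult_carrier_mat)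
  also have "\<dots> = (\<Sum>a\<in>S. mat_trace E)"
  proof (rule sum.cong[OF refl])
    fix a assume a: "a \<in> S"
    have "mat_trace (\<rho> a * E * \<rho> (inv a)) = mat_trace (\<rho> (inv a) * (\<rho> a * E))"
      using \<rho>[OF a] \<rho>[OF m_inv_closed[OF a]] E by (intro mat_trace_mult_comm[of _ m m]) auto
    also have "\<rho> (inv a) * (\<rho> a * E) = (\<rho> (inv a) * \<rho> a) * E"
      using \<rho>[OF a] \<rho>[OF m_inv_closed[OF a]] E by (intro assoc_mult_mat[symmetric]) auto
    also have "\<rho> (inv a) * \<rho> a = 1\<^sub>m m"
      using S rep a by (rule is_rep_inv_mult)
    finally show "mat_trace (\<rho> a * E * \<rho> (inv a)) = mat_trace E" using E by simp
  qed
  finally have "mat_trace A = of_nat (card S) * (if i = j then 1 else 0)"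
    using trace_E by simp
  moreover have "mat_trace A = c * of_nat m"
    unfolding c by (simp add: mat_trace_def)
  ultimately have c_eq: "c = of_nat (card S) * (if i = j then 1 else 0) / of_nat m"
    using \<open>m > 0\<close> by (simp add: field_simps)
  have "A $$ (p, q) = (\<Sum>a\<in>S. \<rho> a $$ (p, i) * \<rho> (inv a) $$ (j, q))"
    unfolding A_def E_def using ijpq by (intro index_rep_average_single_entry[OF S rep rep])
  moreover have "A $$ (p, q) = c * (if p = q then 1 else 0)"
    unfolding c using ijpq by simp
  ultimately show ?thesis using c_eq by auto
qed

lemma irr_rep_orthogonality_distinct:
  assumes S: "subgroup S G" and irr1: "irr_rep G S k \<rho>1" and irr2: "irr_rep G S m \<rho>2"
    and distinct: "\<exists>g\<in>S. mat_trace (\<rho>1 g) \<noteq> mat_trace (\<rho>2 g)"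
    and ijpq: "p < k" "i < k" "j < m" "q < m"
  shows "(\<Sum>a\<in>S. \<rho>1 a $$ (p, i) * \<rho>2 (inv a) $$ (j, q)) = 0"
proof -
  have rep1: "is_rep G S k \<rho>1" and rep2: "is_rep G S m \<rho>2"
    using irr1 irr2 unfolding irr_rep_def by auto
  define E where "E = mat k m (\<lambda>(r, s). if r = i \<and> s = j then (1 :: complex) else 0)"
  have E: "E \<in> carrier_mat k m" unfolding E_def by auto
  define A where "A = mat_sum k m S (\<lambda>a. \<rho>1 a * E * \<rho>2 (inv a))"
  have A: "A \<in> carrier_mat k m" unfolding A_def by simp
  have comm: "\<rho>1 g * A = A * \<rho>2 g" if "g \<in> S" for g
    using rep_average_intertwines[OF S rep1 rep2 E that] unfolding A_def .
  have "A = 0\<^sub>m k m"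
  proof (rule ccontr)
    assume "A \<noteq> 0\<^sub>m k m"
    then show False
      using irr_rep_intertwiner_trace_eq[OF irr1 irr2 A comm] distinct by blast
  qed
  moreover have "A $$ (p, q) = (\<Sum>a\<in>S. \<rho>1 a $$ (p, i) * \<rho>2 (inv a) $$ (j, q))"
    unfolding A_def E_def using ijpq by (intro index_rep_average_single_entry[OF S rep1 rep2])
  ultimately show ?thesis using ijpq by simp
qed

lemma trace_mult_trace_expand:
  assumes S: "subgroup S G" and rep1: "is_rep G S k \<rho>1" and rep2: "is_rep G S m \<rho>2" and c: "c \<in> S"
  shows "(\<Sum>a\<in>S. mat_trace (\<rho>1 a) * mat_trace (\<rho>2 (inv a \<otimes> c)))
    = (\<Sum>p<k. \<Sum>j<m. \<Sum>l<m. \<rho>2 c $$ (l, j) * (\<Sum>a\<in>S. \<rho>1 a $$ (p, p) * \<rho>2 (inv a) $$ (j, l)))"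
proof -
  have \<rho>1: "\<And>g. g \<in> S \<Longrightarrow> \<rho>1 g \<in> carrier_mat k k" using rep1 unfolding is_rep_def by auto
  have \<rho>2: "\<And>g. g \<in> S \<Longrightarrow> \<rho>2 g \<in> carrier_mat m m"
    and mult2: "\<And>g h. g \<in> S \<Longrightarrow> h \<in> S \<Longrightarrow> \<rho>2 (g \<otimes> h) = \<rho>2 g * \<rho>2 h"
    using rep2 unfolding is_rep_def by auto
  have inv_S: "\<And>a. a \<in> S \<Longrightarrow> inv a \<in> S" using S by (rule subgroup.m_inv_closed)
  have summand: "mat_trace (\<rho>1 a) * mat_trace (\<rho>2 (inv a \<otimes> c))
      = (\<Sum>p<k. \<Sum>j<m. \<Sum>l<m. \<rho>2 c $$ (l, j) * (\<rho>1 a $$ (p, p) * \<rho>2 (inv a) $$ (j, l)))"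
    if a: "a \<in> S" for a
  proof -
    have "mat_trace (\<rho>2 (inv a \<otimes> c)) = (\<Sum>j<m. (\<rho>2 (inv a) * \<rho>2 c) $$ (j, j))"
      unfolding mat_trace_def mult2[OF inv_S[OF a] c] using \<rho>2[OF c] \<rho>2[OF inv_S[OF a]] by simp
    also have "\<dots> = (\<Sum>j<m. \<Sum>l<m. \<rho>2 (inv a) $$ (j, l) * \<rho>2 c $$ (l, j))"
      by (intro sum.cong refl index_mult_mat_sum[OF \<rho>2[OF inv_S[OF a]] \<rho>2[OF c]]) auto
    finally have "mat_trace (\<rho>1 a) * mat_trace (\<rho>2 (inv a \<otimes> c))
        = (\<Sum>p<k. \<rho>1 a $$ (p, p)) * (\<Sum>j<m. \<Sum>l<m. \<rho>2 (inv a) $$ (j, l) * \<rho>2 c $$ (l, j))"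
      using \<rho>1[OF a] by (simp add: mat_trace_def)
    also have "\<dots> = (\<Sum>p<k. \<Sum>j<m. \<rho>1 a $$ (p, p) * (\<Sum>l<m. \<rho>2 (inv a) $$ (j, l) * \<rho>2 c $$ (l, j)))"
      by (rule sum_product)
    also have "\<dots> = (\<Sum>p<k. \<Sum>j<m. \<Sum>l<m. \<rho>2 c $$ (l, j) * (\<rho>1 a $$ (p, p) * \<rho>2 (inv a) $$ (j, l)))"
      by (intro sum.cong refl) (simp add: sum_distrib_left algebra_simps)
    finally show ?thesis .
  qed
  have "(\<Sum>a\<in>S. mat_trace (\<rho>1 a) * mat_trace (\<rho>2 (inv a \<otimes> c)))
      = (\<Sum>a\<in>S. \<Sum>p<k. \<Sum>j<m. \<Sum>l<m. \<rho>2 c $$ (l, j) * (\<rho>1 a $$ (p, p) * \<rho>2 (inv a) $$ (j, l)))"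
    using summand by (rule sum.cong[OF refl])
  also have "\<dots> = (\<Sum>p<k. \<Sum>j<m. \<Sum>l<m. \<Sum>a\<in>S. \<rho>2 c $$ (l, j) * (\<rho>1 a $$ (p, p) * \<rho>2 (inv a) $$ (j, l)))"
    by (subst sum.swap, rule sum.cong[OF refl], subst sum.swap, rule sum.cong[OF refl], rule sum.swap)
  finally show ?thesis
    by (simp add: sum_distrib_left)
qed

lemma irr_trace_convolution:
  assumes S: "subgroup S G" and irr1: "irr_rep G S k \<rho>1" and irr2: "irr_rep G S m \<rho>2" and c: "c \<in> S"
  shows "(\<Sum>a\<in>S. mat_trace (\<rho>1 a) * mat_trace (\<rho>2 (inv a \<otimes> c)))
    = (if \<forall>g\<in>S. mat_trace (\<rho>1 g) = mat_trace (\<rho>2 g)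
       then of_nat (card S) / of_nat m * mat_trace (\<rho>2 c) else 0)"
proof -
  have rep1: "is_rep G S k \<rho>1" and rep2: "is_rep G S m \<rho>2"
    using irr1 irr2 unfolding irr_rep_def by auto
  show ?thesis
  proof (cases "\<forall>g\<in>S. mat_trace (\<rho>1 g) = mat_trace (\<rho>2 g)")
    case True
    let ?q = "of_nat (card S) / of_nat m :: complex"
    have "(\<Sum>a\<in>S. mat_trace (\<rho>1 a) * mat_trace (\<rho>2 (inv a \<otimes> c)))
        = (\<Sum>a\<in>S. mat_trace (\<rho>2 a) * mat_trace (\<rho>2 (inv a \<otimes> c)))"
      using True by (intro sum.cong) auto
    also have "\<dots> = (\<Sum>p<m. \<Sum>j<m. \<Sum>l<m. \<rho>2 c $$ (l, j) * (if p = l \<and> p = j then ?q else 0))"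
      unfolding trace_mult_trace_expand[OF S rep2 rep2 c]
      by (intro sum.cong refl) (simp add: irr_rep_orthogonality[OF S irr2])
    also have "\<dots> = (\<Sum>p<m. \<rho>2 c $$ (p, p) * ?q)"
    proof (intro sum.cong refl)
      fix p assume "p \<in> {..<m}"
      have "(\<Sum>l<m. \<rho>2 c $$ (l, j) * (if p = l \<and> p = j then ?q else 0))
          = (if j = p then \<rho>2 c $$ (p, p) * ?q else 0)" for j
        using \<open>p \<in> {..<m}\<close> by (cases "j = p") (auto simp: if_distrib cong: if_cong)
      then show "(\<Sum>j<m. \<Sum>l<m. \<rho>2 c $$ (l, j) * (if p = l \<and> p = j then ?q else 0)) = \<rho>2 c $$ (p, p) * ?q"
        using \<open>p \<in> {..<m}\<close> by simp
    qed
    also have "\<dots> = ?q * mat_trace (\<rho>2 c)"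
      using rep2 c unfolding mat_trace_def is_rep_def by (auto simp: sum_distrib_left mult.commute)
    finally show ?thesis using True by simp
  next
    case False
    have "(\<Sum>p<k. \<Sum>j<m. \<Sum>l<m. \<rho>2 c $$ (l, j) * (\<Sum>a\<in>S. \<rho>1 a $$ (p, p) * \<rho>2 (inv a) $$ (j, l))) = 0"
      using irr_rep_orthogonality_distinct[OF S irr1 irr2] False by (intro sum.neutral ballI) auto
    then show ?thesis
      unfolding trace_mult_trace_expand[OF S rep1 rep2 c] if_not_P[OF False] .
  qed
qed

end

section \<open>Central idempotents\<close>

text \<open>The image under \<open>\<pi>\<close> of the element \<open>\<Sum>s\<in>S. c s \<cdot> s\<close> of the group algebra of \<open>S\<close>.\<close>
definition rep_lincomb :: "'a set \<Rightarrow> nat \<Rightarrow> ('a \<Rightarrow> complex mat) \<Rightarrow> ('a \<Rightarrow> complex) \<Rightarrow> complex mat" where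
  "rep_lincomb S d \<pi> c = mat_sum d d S (\<lambda>s. c s \<cdot>\<^sub>m \<pi> s)"

lemma rep_lincomb_carrier [simp]: "rep_lincomb S d \<pi> c \<in> carrier_mat d d"
  and dim_rep_lincomb [simp]: "dim_row (rep_lincomb S d \<pi> c) = d" "dim_col (rep_lincomb S d \<pi> c) = d"
  by (simp_all add: rep_lincomb_def)

lemma rep_lincomb_cong: "(\<And>s. s \<in> S \<Longrightarrow> c s = c' s) \<Longrightarrow> rep_lincomb S d \<pi> c = rep_lincomb S d \<pi> c'"
  unfolding rep_lincomb_def by (auto intro: mat_sum_cong)

lemma index_rep_lincomb:
  assumes "\<And>s. s \<in> S \<Longrightarrow> \<pi> s \<in> carrier_mat d d" "i < d" "j < d"
  shows "rep_lincomb S d \<pi> c $$ (i, j) = (\<Sum>s\<in>S. c s * \<pi> s $$ (i, j))"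
  unfolding rep_lincomb_def using assms by (auto intro!: sum.cong simp: carrier_matD[OF assms(1)])

lemma mult_rep_lincomb:
  assumes "A \<in> carrier_mat d d" "\<And>s. s \<in> S \<Longrightarrow> \<pi> s \<in> carrier_mat d d"
  shows "A * rep_lincomb S d \<pi> c = mat_sum d d S (\<lambda>s. c s \<cdot>\<^sub>m (A * \<pi> s))"
  unfolding rep_lincomb_def using assms
  by (subst mult_mat_sum[of _ d d]) (auto intro!: mat_sum_cong mult_smult_distrib[OF assms])

lemma rep_lincomb_mult:
  assumes "A \<in> carrier_mat d d" "\<And>s. s \<in> S \<Longrightarrow> \<pi> s \<in> carrier_mat d d"
  shows "rep_lincomb S d \<pi> c * A = mat_sum d d S (\<lambda>s. c s \<cdot>\<^sub>m (\<pi> s * A))"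
  unfolding rep_lincomb_def using assms
  by (subst mat_sum_mult[of _ d d]) (auto intro!: mat_sum_cong mult_smult_assoc_mat[OF assms(2) assms(1)])

lemma mat_trace_mult_rep_lincomb:
  assumes A: "A \<in> carrier_mat d d" and \<pi>: "\<And>s. s \<in> S \<Longrightarrow> \<pi> s \<in> carrier_mat d d"
  shows "mat_trace (A * rep_lincomb S d \<pi> c) = (\<Sum>s\<in>S. c s * mat_trace (A * \<pi> s))"
proof -
  have "A * rep_lincomb S d \<pi> c = mat_sum d d S (\<lambda>s. c s \<cdot>\<^sub>m (A * \<pi> s))"
    using A \<pi> by (rule mult_rep_lincomb)
  then have "mat_trace (A * rep_lincomb S d \<pi> c) = (\<Sum>s\<in>S. mat_trace (c s \<cdot>\<^sub>m (A * \<pi> s)))"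
    using A \<pi> by (simp add: mat_trace_mat_sum)
  also have "\<dots> = (\<Sum>s\<in>S. c s * mat_trace (A * \<pi> s))"
    using A \<pi> by (intro sum.cong refl mat_trace_smult[of _ d]) auto
  finally show ?thesis .
qed

lemma mat_trace_rep_lincomb:
  assumes "\<And>s. s \<in> S \<Longrightarrow> \<pi> s \<in> carrier_mat d d"
  shows "mat_trace (rep_lincomb S d \<pi> c) = (\<Sum>s\<in>S. c s * mat_trace (\<pi> s))"
  using mat_trace_mult_rep_lincomb[of "1\<^sub>m d" d S \<pi> c] assms
  by (auto intro!: sum.cong simp: left_mult_one_mat[OF assms])

text \<open>Coefficients of the central idempotent \<open>\<chi>(1)/|S| \<Sum>s\<in>S. \<chi>(s\<^sup>-\<^sup>1) \<cdot> s\<close> of \<open>\<chi>\<close>;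
  for a character \<open>\<chi>(s\<^sup>-\<^sup>1) = cnj (\<chi> s)\<close>.\<close>
definition idem_coeff :: "('a, 'b) monoid_scheme \<Rightarrow> 'a set \<Rightarrow> ('a \<Rightarrow> complex) \<Rightarrow> 'a \<Rightarrow> complex" where
  "idem_coeff G S \<chi> s = \<chi> \<one>\<^bsub>G\<^esub> / of_nat (card S) * cnj (\<chi> s)"

context group
begin

lemma rep_lincomb_mult_rep_lincomb:
  assumes S: "subgroup S G"
    and \<pi>: "\<And>s. s \<in> S \<Longrightarrow> \<pi> s \<in> carrier_mat d d"
    and mult: "\<And>a b. a \<in> S \<Longrightarrow> b \<in> S \<Longrightarrow> \<pi> (a \<otimes> b) = \<pi> a * \<pi> b"
  shows "rep_lincomb S d \<pi> c1 * rep_lincomb S d \<pi> c2 = rep_lincomb S d \<pi> (\<lambda>c. \<Sum>a\<in>S. c1 a * c2 (inv a \<otimes> c))"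
proof -
  interpret subgroup S G by fact
  have shifted: "\<pi> a * rep_lincomb S d \<pi> c2 = rep_lincomb S d \<pi> (\<lambda>c. c2 (inv a \<otimes> c))" if a: "a \<in> S" for a
  proof -
    have "\<pi> a * rep_lincomb S d \<pi> c2 = mat_sum d d S (\<lambda>b. c2 b \<cdot>\<^sub>m (\<pi> a * \<pi> b))"
      using \<pi>[OF a] \<pi> by (rule mult_rep_lincomb)
    also have "\<dots> = mat_sum d d S (\<lambda>b. c2 b \<cdot>\<^sub>m \<pi> (a \<otimes> b))"
      by (rule mat_sum_cong) (simp add: mult[OF a])
    also have "\<dots> = mat_sum d d S (\<lambda>c. c2 (inv a \<otimes> c) \<cdot>\<^sub>m \<pi> (a \<otimes> (inv a \<otimes> c)))"
      by (rule mat_sum_reindex[OF subgroup_left_mult_bij_betw[OF S a]])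
    also have "\<dots> = rep_lincomb S d \<pi> (\<lambda>c. c2 (inv a \<otimes> c))"
      unfolding rep_lincomb_def using a subset by (intro mat_sum_cong) auto
    finally show ?thesis .
  qed
  have "rep_lincomb S d \<pi> c1 * rep_lincomb S d \<pi> c2
      = mat_sum d d S (\<lambda>a. c1 a \<cdot>\<^sub>m (\<pi> a * rep_lincomb S d \<pi> c2))"
    using rep_lincomb_carrier \<pi> by (rule rep_lincomb_mult)
  also have "\<dots> = mat_sum d d S (\<lambda>a. c1 a \<cdot>\<^sub>m rep_lincomb S d \<pi> (\<lambda>c. c2 (inv a \<otimes> c)))"
    by (rule mat_sum_cong) (simp add: shifted)
  also have "\<dots> = rep_lincomb S d \<pi> (\<lambda>c. \<Sum>a\<in>S. c1 a * c2 (inv a \<otimes> c))"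
  proof (rule eq_matI)
    fix i j assume "i < dim_row (rep_lincomb S d \<pi> (\<lambda>c. \<Sum>a\<in>S. c1 a * c2 (inv a \<otimes> c)))"
      "j < dim_col (rep_lincomb S d \<pi> (\<lambda>c. \<Sum>a\<in>S. c1 a * c2 (inv a \<otimes> c)))"
    then have ij: "i < d" "j < d" by auto
    have "mat_sum d d S (\<lambda>a. c1 a \<cdot>\<^sub>m rep_lincomb S d \<pi> (\<lambda>c. c2 (inv a \<otimes> c))) $$ (i, j)
        = (\<Sum>a\<in>S. \<Sum>c\<in>S. c1 a * (c2 (inv a \<otimes> c) * \<pi> c $$ (i, j)))"
      using ij \<pi> by (simp add: index_rep_lincomb sum_distrib_left)
    also have "\<dots> = (\<Sum>c\<in>S. (\<Sum>a\<in>S. c1 a * c2 (inv a \<otimes> c)) * \<pi> c $$ (i, j))"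
      by (subst sum.swap) (simp add: sum_distrib_right mult.assoc)
    also have "\<dots> = rep_lincomb S d \<pi> (\<lambda>c. \<Sum>a\<in>S. c1 a * c2 (inv a \<otimes> c)) $$ (i, j)"
      using ij \<pi> by (simp add: index_rep_lincomb)
    finally show "mat_sum d d S (\<lambda>a. c1 a \<cdot>\<^sub>m rep_lincomb S d \<pi> (\<lambda>c. c2 (inv a \<otimes> c))) $$ (i, j)
        = rep_lincomb S d \<pi> (\<lambda>c. \<Sum>a\<in>S. c1 a * c2 (inv a \<otimes> c)) $$ (i, j)" .
  qed auto
  finally show ?thesis .
qed

lemma rep_lincomb_commute:
  assumes N: "S \<lhd> G" and t: "t \<in> carrier G"
    and \<pi>: "\<And>s. s \<in> S \<Longrightarrow> \<pi> s \<in> carrier_mat d d" and \<pi>_t: "\<pi> t \<in> carrier_mat d d"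
    and mult_left: "\<And>s. s \<in> S \<Longrightarrow> \<pi> (t \<otimes> s) = \<pi> t * \<pi> s"
    and mult_right: "\<And>s. s \<in> S \<Longrightarrow> \<pi> (s \<otimes> t) = \<pi> s * \<pi> t"
    and invariant: "\<And>s. s \<in> S \<Longrightarrow> c (t \<otimes> s \<otimes> inv t) = c s"
  shows "\<pi> t * rep_lincomb S d \<pi> c = rep_lincomb S d \<pi> c * \<pi> t"
proof -
  interpret N: normal S G by fact
  have "\<pi> t * rep_lincomb S d \<pi> c = mat_sum d d S (\<lambda>s. c s \<cdot>\<^sub>m (\<pi> t * \<pi> s))"
    using \<pi>_t \<pi> by (rule mult_rep_lincomb)
  also have "\<dots> = mat_sum d d S (\<lambda>s. c s \<cdot>\<^sub>m \<pi> (t \<otimes> s))"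
    by (rule mat_sum_cong) (simp add: mult_left)
  also have "\<dots> = mat_sum d d S (\<lambda>s. c (inv t \<otimes> s \<otimes> t) \<cdot>\<^sub>m \<pi> (t \<otimes> (inv t \<otimes> s \<otimes> t)))"
    by (rule mat_sum_reindex[OF normal_conj_bij_betw[OF N t]])
  also have "\<dots> = mat_sum d d S (\<lambda>s. c s \<cdot>\<^sub>m \<pi> (s \<otimes> t))"
  proof (rule mat_sum_cong)
    fix s assume s: "s \<in> S"
    then have "s \<in> carrier G" using N.subset by blast
    then have "t \<otimes> (inv t \<otimes> s \<otimes> t) = s \<otimes> t" "t \<otimes> (inv t \<otimes> s \<otimes> t) \<otimes> inv t = s"
      using t by (simp_all add: m_assoc)
    moreover have "c (t \<otimes> (inv t \<otimes> s \<otimes> t) \<otimes> inv t) = c (inv t \<otimes> s \<otimes> t)"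
      using invariant N.inv_op_closed1[OF t s] by blast
    ultimately show "c (inv t \<otimes> s \<otimes> t) \<cdot>\<^sub>m \<pi> (t \<otimes> (inv t \<otimes> s \<otimes> t)) = c s \<cdot>\<^sub>m \<pi> (s \<otimes> t)"
      by simp
  qed
  also have "\<dots> = mat_sum d d S (\<lambda>s. c s \<cdot>\<^sub>m (\<pi> s * \<pi> t))"
    by (rule mat_sum_cong) (simp add: mult_right)
  also have "\<dots> = rep_lincomb S d \<pi> c * \<pi> t"
    using \<pi>_t \<pi> by (rule rep_lincomb_mult[symmetric])
  finally show ?thesis .
qed

lemma char_of_one: "subgroup S G \<Longrightarrow> is_rep G S m \<rho> \<Longrightarrow> char_of S \<rho> \<one> = of_nat m"
  by (simp add: char_of_def is_rep_def subgroup.one_closed)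

lemma idem_coeff_char_of:
  "subgroup S G \<Longrightarrow> s \<in> S \<Longrightarrow> idem_coeff G S (char_of S \<rho>) s = idem_coeff G S (\<lambda>s. mat_trace (\<rho> s)) s"
  by (simp add: idem_coeff_def char_of_def subgroup.one_closed)

lemma idem_coeff_convolution:
  assumes S: "subgroup S G" "finite S" and irr1: "irr_rep G S k \<rho>1" and irr2: "irr_rep G S m \<rho>2"
    and c: "c \<in> S"
  shows "(\<Sum>a\<in>S. idem_coeff G S (\<lambda>s. mat_trace (\<rho>1 s)) a * idem_coeff G S (\<lambda>s. mat_trace (\<rho>2 s)) (inv a \<otimes> c))
    = (if \<forall>g\<in>S. mat_trace (\<rho>1 g) = mat_trace (\<rho>2 g) then idem_coeff G S (\<lambda>s. mat_trace (\<rho>2 s)) c else 0)"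
proof -
  have "m > 0" and one: "mat_trace (\<rho>1 \<one>) = of_nat k" "mat_trace (\<rho>2 \<one>) = of_nat m"
    using irr1 irr2 by (auto simp: irr_rep_def is_rep_def)
  have "card S > 0"
    using S subgroup.one_closed[OF S(1)] by (auto simp: card_gt_0_iff)
  have "(\<Sum>a\<in>S. idem_coeff G S (\<lambda>s. mat_trace (\<rho>1 s)) a * idem_coeff G S (\<lambda>s. mat_trace (\<rho>2 s)) (inv a \<otimes> c))
      = of_nat k / of_nat (card S) * (of_nat m / of_nat (card S))
        * cnj (\<Sum>a\<in>S. mat_trace (\<rho>1 a) * mat_trace (\<rho>2 (inv a \<otimes> c)))"
    unfolding idem_coeff_def one by (simp add: sum_distrib_left algebra_simps)
  also have "\<dots> = of_nat k / of_nat (card S) * (of_nat m / of_nat (card S))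
      * cnj (if \<forall>g\<in>S. mat_trace (\<rho>1 g) = mat_trace (\<rho>2 g)
             then of_nat (card S) / of_nat m * mat_trace (\<rho>2 c) else 0)"
    unfolding irr_trace_convolution[OF S(1) irr1 irr2 c] ..
  also have "\<dots> = (if \<forall>g\<in>S. mat_trace (\<rho>1 g) = mat_trace (\<rho>2 g) then idem_coeff G S (\<lambda>s. mat_trace (\<rho>2 s)) c else 0)"
  proof (cases "\<forall>g\<in>S. mat_trace (\<rho>1 g) = mat_trace (\<rho>2 g)")
    case True
    then have "of_nat k = (of_nat m :: complex)"
      using one subgroup.one_closed[OF S(1)] by metis
    then show ?thesis
      using True \<open>m > 0\<close> \<open>card S > 0\<close> unfolding idem_coeff_def one by (simp add: field_simps)
  next
    case False
    then show ?thesis unfolding if_not_P[OF False] by simp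
  qed
  finally show ?thesis .
qed

lemma rep_lincomb_idem_coeff_idempotent:
  assumes S: "subgroup S G" "finite S" and irr: "irr_rep G S m \<rho>"
    and \<pi>: "\<And>s. s \<in> S \<Longrightarrow> \<pi> s \<in> carrier_mat d d"
    and mult: "\<And>a b. a \<in> S \<Longrightarrow> b \<in> S \<Longrightarrow> \<pi> (a \<otimes> b) = \<pi> a * \<pi> b"
  shows "rep_lincomb S d \<pi> (idem_coeff G S (char_of S \<rho>)) * rep_lincomb S d \<pi> (idem_coeff G S (char_of S \<rho>))
    = rep_lincomb S d \<pi> (idem_coeff G S (char_of S \<rho>))"
    (is "?P * ?P = ?P")
proof -
  let ?e = "idem_coeff G S (char_of S \<rho>)" and ?e' = "idem_coeff G S (\<lambda>s. mat_trace (\<rho> s))"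
  have "?P * ?P = rep_lincomb S d \<pi> (\<lambda>c. \<Sum>a\<in>S. ?e a * ?e (inv a \<otimes> c))"
    by (rule rep_lincomb_mult_rep_lincomb[OF S(1) \<pi> mult])
  also have "\<dots> = ?P"
  proof (rule rep_lincomb_cong)
    fix c assume c: "c \<in> S"
    have "(\<Sum>a\<in>S. ?e a * ?e (inv a \<otimes> c)) = (\<Sum>a\<in>S. ?e' a * ?e' (inv a \<otimes> c))"
      using c S(1) by (intro sum.cong refl) (simp add: idem_coeff_char_of subgroup.m_closed subgroup.m_inv_closed)
    also have "\<dots> = ?e' c"
      using idem_coeff_convolution[OF S irr irr c] by simp
    finally show "(\<Sum>a\<in>S. ?e a * ?e (inv a \<otimes> c)) = ?e c"
      using idem_coeff_char_of[OF S(1) c] by simp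
  qed
  finally show ?thesis .
qed

lemma rep_lincomb_idem_coeff_commute:
  assumes N: "S \<lhd> G" and L: "L \<subseteq> carrier G" "S \<subseteq> L" and rep: "is_rep G L d \<pi>"
    and t: "t \<in> L" and fixes_\<chi>: "\<And>s. s \<in> S \<Longrightarrow> \<chi> (t \<otimes> s \<otimes> inv t) = \<chi> s"
  shows "\<pi> t * rep_lincomb S d \<pi> (idem_coeff G S \<chi>) = rep_lincomb S d \<pi> (idem_coeff G S \<chi>) * \<pi> t"
proof (rule rep_lincomb_commute[OF N])
  show "t \<in> carrier G" using t L(1) by blast
  show "idem_coeff G S \<chi> (t \<otimes> s \<otimes> inv t) = idem_coeff G S \<chi> s" if "s \<in> S" for s
    using fixes_\<chi>[OF that] by (simp add: idem_coeff_def)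
qed (use rep t L(2) in \<open>auto simp: is_rep_def\<close>)

lemma rep_lincomb_idem_coeff_eq_one:
  assumes N: "S \<lhd> G" and fin: "finite S" and irr_\<rho>: "irr_rep G S m \<rho>"
    and K: "subgroup K G" "S \<subseteq> K"
    and K_fixes: "\<And>k s. k \<in> K \<Longrightarrow> s \<in> S \<Longrightarrow> char_of S \<rho> (k \<otimes> s \<otimes> inv k) = char_of S \<rho> s"
    and irr_\<tau>: "irr_rep G K n \<tau>" and above: "lies_above S (char_of K \<tau>) (char_of S \<rho>)"
  shows "rep_lincomb S n \<tau> (idem_coeff G S (char_of S \<rho>)) = 1\<^sub>m n"
proof -
  interpret N: normal S G by fact
  let ?e = "idem_coeff G S (char_of S \<rho>)"
  define P where "P = rep_lincomb S n \<tau> ?e"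
  have rep_\<tau>: "is_rep G K n \<tau>" and "n > 0" using irr_\<tau> unfolding irr_rep_def by auto
  have rep_\<rho>: "is_rep G S m \<rho>" and "m > 0" using irr_\<rho> unfolding irr_rep_def by auto
  have \<tau>: "\<And>s. s \<in> S \<Longrightarrow> \<tau> s \<in> carrier_mat n n"
    and mult: "\<And>a b. a \<in> S \<Longrightarrow> b \<in> S \<Longrightarrow> \<tau> (a \<otimes> b) = \<tau> a * \<tau> b"
    using rep_\<tau> K(2) unfolding is_rep_def by auto
  have "\<tau> g * P = P * \<tau> g" if "g \<in> K" for g
    unfolding P_def
    by (rule rep_lincomb_idem_coeff_commute[OF N subgroup.subset[OF K(1)] K(2) rep_\<tau> that])
      (rule K_fixes[OF that])
  then obtain c where c: "P = c \<cdot>\<^sub>m 1\<^sub>m n"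
    using irr_rep_commutant_scalar[OF irr_\<tau>, of P] P_def by (metis rep_lincomb_carrier)
  have "P * P = P"
    unfolding P_def by (rule rep_lincomb_idem_coeff_idempotent[OF N.subgroup_axioms fin irr_\<rho> \<tau> mult])
  moreover have "c \<cdot>\<^sub>m 1\<^sub>m n * (c \<cdot>\<^sub>m 1\<^sub>m n) = c \<cdot>\<^sub>m (c \<cdot>\<^sub>m 1\<^sub>m n)"
    using mult_smult_assoc_mat[of "1\<^sub>m n" n n "c \<cdot>\<^sub>m 1\<^sub>m n" n c] by simp
  ultimately have "c \<cdot>\<^sub>m (c \<cdot>\<^sub>m 1\<^sub>m n) = c \<cdot>\<^sub>m 1\<^sub>m n"
    unfolding c by simp
  then have "(c \<cdot>\<^sub>m (c \<cdot>\<^sub>m 1\<^sub>m n)) $$ (0, 0) = (c \<cdot>\<^sub>m 1\<^sub>m n) $$ (0, 0)"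
    by simp
  then have "c * c = c"
    using \<open>n > 0\<close> by simp
  have "mat_trace P = (\<Sum>s\<in>S. ?e s * mat_trace (\<tau> s))"
    unfolding P_def using \<tau> by (rule mat_trace_rep_lincomb)
  also have "\<dots> = of_nat m * inner_char S (res S (char_of K \<tau>)) (char_of S \<rho>)"
    using K(2) char_of_one[OF N.subgroup_axioms rep_\<rho>]
    by (auto simp: inner_char_def idem_coeff_def res_def char_of_def sum_divide_distrib sum_distrib_left
        intro!: sum.cong)
  finally have "mat_trace P \<noteq> 0"
    using above \<open>m > 0\<close> unfolding lies_above_def by simp
  then have "c \<noteq> 0" unfolding c by (simp add: mat_trace_smult[of _ n])
  then have "c = 1" using \<open>c * c = c\<close> by simp
  then have "P = 1\<^sub>m n" unfolding c by (intro eq_matI) auto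
  then show ?thesis unfolding P_def .
qed

lemma rep_lincomb_conj_idem_coeff_eq_zero:
  assumes N: "S \<lhd> G" and fin: "finite S" and irr_\<rho>: "irr_rep G S m \<rho>"
    and K: "subgroup K G" "S \<subseteq> K" and rep_\<tau>: "is_rep G K n \<tau>"
    and one: "rep_lincomb S n \<tau> (idem_coeff G S (char_of S \<rho>)) = 1\<^sub>m n"
    and x: "x \<in> carrier G" and moves: "\<exists>s\<in>S. char_of S \<rho> (x \<otimes> s \<otimes> inv x) \<noteq> char_of S \<rho> s"
  shows "rep_lincomb S n \<tau> (\<lambda>s. idem_coeff G S (char_of S \<rho>) (inv x \<otimes> s \<otimes> x)) = 0\<^sub>m n n"
proof -
  interpret N: normal S G by fact
  let ?e = "idem_coeff G S (char_of S \<rho>)"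
  let ?\<rho>x = "\<lambda>s. \<rho> (inv x \<otimes> s \<otimes> x)"
  have \<tau>: "\<And>s. s \<in> S \<Longrightarrow> \<tau> s \<in> carrier_mat n n"
    and mult: "\<And>a b. a \<in> S \<Longrightarrow> b \<in> S \<Longrightarrow> \<tau> (a \<otimes> b) = \<tau> a * \<tau> b"
    using rep_\<tau> K(2) unfolding is_rep_def by auto
  have S_carrier: "\<And>s. s \<in> S \<Longrightarrow> s \<in> carrier G" using N.subset by blast
  have irr_\<rho>x: "irr_rep G S m ?\<rho>x" by (rule irr_rep_conj[OF N x irr_\<rho>])
  have distinct: "\<not> (\<forall>g\<in>S. mat_trace (?\<rho>x g) = mat_trace (\<rho> g))"
  proof
    assume same: "\<forall>g\<in>S. mat_trace (?\<rho>x g) = mat_trace (\<rho> g)"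
    have "char_of S \<rho> (x \<otimes> s \<otimes> inv x) = char_of S \<rho> s" if s: "s \<in> S" for s
    proof -
      have "inv x \<otimes> (x \<otimes> s \<otimes> inv x) \<otimes> x = s" using x S_carrier[OF s] by (simp add: m_assoc)
      then show ?thesis
        using same[rule_format, OF N.inv_op_closed2[OF x s]] N.inv_op_closed2[OF x s] s
        by (simp add: char_of_def)
    qed
    then show False using moves by blast
  qed
  have coeff: "?e (inv x \<otimes> a \<otimes> x) = idem_coeff G S (\<lambda>s. mat_trace (?\<rho>x s)) a" if "a \<in> S" for a
    using x N.inv_op_closed1[OF x that] by (simp add: idem_coeff_def char_of_def)
  have "rep_lincomb S n \<tau> (\<lambda>s. ?e (inv x \<otimes> s \<otimes> x))
      = rep_lincomb S n \<tau> (\<lambda>s. ?e (inv x \<otimes> s \<otimes> x)) * rep_lincomb S n \<tau> ?e"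
    using one by simp
  also have "\<dots> = rep_lincomb S n \<tau> (\<lambda>c. \<Sum>a\<in>S. ?e (inv x \<otimes> a \<otimes> x) * ?e (inv a \<otimes> c))"
    by (rule rep_lincomb_mult_rep_lincomb[OF N.subgroup_axioms \<tau> mult])
  also have "\<dots> = rep_lincomb S n \<tau> (\<lambda>_. 0)"
  proof (rule rep_lincomb_cong)
    fix c assume c: "c \<in> S"
    have "(\<Sum>a\<in>S. ?e (inv x \<otimes> a \<otimes> x) * ?e (inv a \<otimes> c))
        = (\<Sum>a\<in>S. idem_coeff G S (\<lambda>s. mat_trace (?\<rho>x s)) a * idem_coeff G S (\<lambda>s. mat_trace (\<rho> s)) (inv a \<otimes> c))"
      using c coeff by (intro sum.cong refl) (simp add: idem_coeff_char_of[OF N.subgroup_axioms])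
    also have "\<dots> = 0"
      using idem_coeff_convolution[OF N.subgroup_axioms fin irr_\<rho>x irr_\<rho> c] distinct by simp
    finally show "(\<Sum>a\<in>S. ?e (inv x \<otimes> a \<otimes> x) * ?e (inv a \<otimes> c)) = 0" .
  qed
  also have "\<dots> = 0\<^sub>m n n"
    using \<tau> by (intro eq_matI) (simp_all add: index_rep_lincomb)
  finally show ?thesis .
qed

end

section \<open>Stabilizers\<close>

lemma stab_mono: "K \<subseteq> L \<Longrightarrow> stab G K S \<phi> \<subseteq> stab G L S \<phi>"
  by (auto simp: stab_def)

lemma stab_subset: "stab G K S \<phi> \<subseteq> K"
  by (auto simp: stab_def)

lemma stab_fixes: "g \<in> stab G K S \<phi> \<Longrightarrow> s \<in> S \<Longrightarrow> \<phi> (g \<otimes>\<^bsub>G\<^esub> s \<otimes>\<^bsub>G\<^esub> inv\<^bsub>G\<^esub> g) = \<phi> s"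
  by (simp add: stab_def)

context group
begin

lemma stab_normal_iff:
  assumes "S \<lhd> G" "K \<subseteq> carrier G"
  shows "g \<in> stab G K S \<phi> \<longleftrightarrow> g \<in> K \<and> (\<forall>s\<in>S. \<phi> (g \<otimes> s \<otimes> inv g) = \<phi> s)"
proof
  assume "g \<in> stab G K S \<phi>"
  then show "g \<in> K \<and> (\<forall>s\<in>S. \<phi> (g \<otimes> s \<otimes> inv g) = \<phi> s)"
    by (simp add: stab_def)
next
  assume fixes_\<phi>: "g \<in> K \<and> (\<forall>s\<in>S. \<phi> (g \<otimes> s \<otimes> inv g) = \<phi> s)"
  then have "g \<in> carrier G" using assms(2) by blast
  then have "(\<lambda>s. inv g \<otimes> s \<otimes> g) ` S = S"
    by (rule bij_betw_imp_surj_on[OF normal_conj_bij_betw[OF assms(1)]])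
  then show "g \<in> stab G K S \<phi>"
    using fixes_\<phi> by (simp add: stab_def)
qed

lemma stab_normal_subgroup:
  assumes K: "subgroup K G" and N: "S \<lhd> G"
  shows "subgroup (stab G K S \<phi>) G"
proof -
  interpret N: normal S G by fact
  interpret K: subgroup K G by fact
  have mem: "g \<in> stab G K S \<phi> \<longleftrightarrow> g \<in> K \<and> (\<forall>s\<in>S. \<phi> (g \<otimes> s \<otimes> inv g) = \<phi> s)" for g
    using stab_normal_iff[OF N K.subset] .
  have S_carrier: "\<And>s. s \<in> S \<Longrightarrow> s \<in> carrier G" using N.subset by blast
  show ?thesis
  proof (rule subgroupI)
    show "stab G K S \<phi> \<subseteq> carrier G" using K.subset by (auto simp: mem)
    have "\<one> \<in> stab G K S \<phi>" using S_carrier by (simp add: mem)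
    then show "stab G K S \<phi> \<noteq> {}" by auto
  next
    fix a assume "a \<in> stab G K S \<phi>"
    then have a: "a \<in> K" "a \<in> carrier G" and fix_a: "\<And>s. s \<in> S \<Longrightarrow> \<phi> (a \<otimes> s \<otimes> inv a) = \<phi> s"
      using K.subset by (auto simp: mem)
    have "\<phi> (inv a \<otimes> s \<otimes> inv (inv a)) = \<phi> s" if s: "s \<in> S" for s
    proof -
      have "a \<otimes> (inv a \<otimes> s \<otimes> a) \<otimes> inv a = s"
        using a S_carrier[OF s] by (simp add: m_assoc)
      then have "\<phi> s = \<phi> (inv a \<otimes> s \<otimes> a)"
        using fix_a[OF N.inv_op_closed1[OF a(2) s]] by simp
      then show ?thesis using a by simp
    qed
    then show "inv a \<in> stab G K S \<phi>" using a by (simp add: mem)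
  next
    fix a b assume "a \<in> stab G K S \<phi>" "b \<in> stab G K S \<phi>"
    then have ab: "a \<in> K" "b \<in> K" "a \<in> carrier G" "b \<in> carrier G"
      and fix_a: "\<And>s. s \<in> S \<Longrightarrow> \<phi> (a \<otimes> s \<otimes> inv a) = \<phi> s"
      and fix_b: "\<And>s. s \<in> S \<Longrightarrow> \<phi> (b \<otimes> s \<otimes> inv b) = \<phi> s"
      using K.subset by (auto simp: mem)
    have "\<phi> (a \<otimes> b \<otimes> s \<otimes> inv (a \<otimes> b)) = \<phi> s" if s: "s \<in> S" for s
    proof -
      have "a \<otimes> b \<otimes> s \<otimes> inv (a \<otimes> b) = a \<otimes> (b \<otimes> s \<otimes> inv b) \<otimes> inv a"
        using ab S_carrier[OF s] by (simp add: m_assoc inv_mult_group)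
      then show ?thesis
        using fix_a[OF N.inv_op_closed2[OF ab(4) s]] fix_b[OF s] by simp
    qed
    then show "a \<otimes> b \<in> stab G K S \<phi>" using ab by (simp add: mem)
  qed
qed

lemma subgroup_subset_stab_char:
  assumes H: "subgroup H G" and rep: "is_rep G H n \<rho>"
  shows "H \<subseteq> stab G (carrier G) H (char_of H \<rho>)"
proof
  interpret subgroup H G by fact
  fix h assume h: "h \<in> H"
  have "(\<lambda>x. inv h \<otimes> x \<otimes> h) ` H = H"
    using conj_bij_betw[OF subset, of h] h subset bij_betw_imp_surj_on by blast
  moreover have "char_of H \<rho> (h \<otimes> x \<otimes> inv h) = char_of H \<rho> x" if "x \<in> H" for x
    using rep_trace_conj[OF H rep h that] h that by (simp add: char_of_def)
  ultimately show "h \<in> stab G (carrier G) H (char_of H \<rho>)"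
    using h subset unfolding stab_def by blast
qed

lemma normal_subset_stab_char:
  assumes N: "S \<lhd> G" and H: "subgroup H G" "S \<subseteq> H" and rep: "is_rep G S m \<rho>"
  shows "S \<subseteq> stab G H S (char_of S \<rho>)"
proof
  interpret N: normal S G by fact
  fix s assume s: "s \<in> S"
  have "char_of S \<rho> (s \<otimes> x \<otimes> inv s) = char_of S \<rho> x" if "x \<in> S" for x
    using rep_trace_conj[OF N.subgroup_axioms rep s that] s that by (simp add: char_of_def)
  then show "s \<in> stab G H S (char_of S \<rho>)"
    using stab_normal_iff[OF N subgroup.subset[OF H(1)]] s H(2) by blast
qed

end

section \<open>The isotypic component of an extension\<close>

lemma extends_to_if_trace_eq:
  assumes rep: "is_rep G T r \<rho>" and "K \<subseteq> T"
    and trace: "\<And>k. k \<in> K \<Longrightarrow> mat_trace (\<rho> k) = char_of K \<tau> k"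
  shows "extends_to G T K (char_of K \<tau>)"
proof -
  have "res K (char_of T \<rho>) = char_of K \<tau>"
  proof
    fix g
    show "res K (char_of T \<rho>) g = char_of K \<tau> g"
      using \<open>K \<subseteq> T\<close> trace[of g] by (auto simp: res_def char_of_def)
  qed
  then show ?thesis using rep unfolding extends_to_def is_character_def by blast
qed

context group
begin

text \<open>This kills the terms with \<open>x \<notin> K\<close> in the induction formula for \<open>\<theta>\<close>.\<close>
lemma rep_lincomb_conj_idem_coeff:
  fixes S H :: "'a set" and \<rho> \<tau> :: "'a \<Rightarrow> complex mat"
  defines "K \<equiv> stab G H S (char_of S \<rho>)"
  assumes N: "S \<lhd> G" and fin: "finite S" and H: "subgroup H G" "S \<subseteq> H"
    and irr_\<rho>: "irr_rep G S m \<rho>" and rep_\<tau>: "is_rep G K n \<tau>"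
    and one: "rep_lincomb S n \<tau> (idem_coeff G S (char_of S \<rho>)) = 1\<^sub>m n"
    and x: "x \<in> H"
  shows "rep_lincomb S n \<tau> (\<lambda>s. idem_coeff G S (char_of S \<rho>) (inv x \<otimes> s \<otimes> x))
    = (if x \<in> K then 1\<^sub>m n else 0\<^sub>m n n)"
proof -
  have K_iff: "g \<in> K \<longleftrightarrow> g \<in> H \<and> (\<forall>s\<in>S. char_of S \<rho> (g \<otimes> s \<otimes> inv g) = char_of S \<rho> s)" for g
    unfolding K_def using stab_normal_iff[OF N subgroup.subset[OF H(1)]] .
  have K: "subgroup K G" unfolding K_def by (rule stab_normal_subgroup[OF H(1) N])
  have rep_\<rho>: "is_rep G S m \<rho>" using irr_\<rho> by (simp add: irr_rep_def)
  have SK: "S \<subseteq> K" unfolding K_def by (rule normal_subset_stab_char[OF N H rep_\<rho>])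
  have xc: "x \<in> carrier G" using x subgroup.subset[OF H(1)] by blast
  show ?thesis
  proof (cases "x \<in> K")
    case True
    have "idem_coeff G S (char_of S \<rho>) (inv x \<otimes> s \<otimes> x) = idem_coeff G S (char_of S \<rho>) s" if "s \<in> S" for s
      using K_iff[of "inv x"] subgroup.m_inv_closed[OF K True] that xc by (simp add: idem_coeff_def)
    then show ?thesis unfolding if_P[OF True] one[symmetric] by (rule rep_lincomb_cong)
  next
    case False
    then have "\<exists>s\<in>S. char_of S \<rho> (x \<otimes> s \<otimes> inv x) \<noteq> char_of S \<rho> s"
      using K_iff x by blast
    then show ?thesis
      unfolding if_not_P[OF False]
      by (rule rep_lincomb_conj_idem_coeff_eq_zero[OF N fin irr_\<rho> K SK rep_\<tau> one xc])
  qed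
qed

lemma sum_res_char_conj_eq_mat_trace:
  assumes N: "S \<lhd> G" and K: "subgroup K G" "S \<subseteq> K" and rep_\<tau>: "is_rep G K n \<tau>"
    and x: "x \<in> carrier G" and y: "y \<in> K"
  shows "(\<Sum>s\<in>S. c s * res K (char_of K \<tau>) (y \<otimes> (x \<otimes> s \<otimes> inv x)))
    = mat_trace (\<tau> y * rep_lincomb S n \<tau> (\<lambda>s. c (inv x \<otimes> s \<otimes> x)))"
proof -
  interpret N: normal S G by fact
  have \<tau>: "\<And>g. g \<in> K \<Longrightarrow> \<tau> g \<in> carrier_mat n n"
    and mult: "\<And>a b. a \<in> K \<Longrightarrow> b \<in> K \<Longrightarrow> \<tau> (a \<otimes> b) = \<tau> a * \<tau> b"
    using rep_\<tau> unfolding is_rep_def by auto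
  have S_carrier: "\<And>s. s \<in> S \<Longrightarrow> s \<in> carrier G" using N.subset by blast
  have "(\<Sum>s\<in>S. c s * res K (char_of K \<tau>) (y \<otimes> (x \<otimes> s \<otimes> inv x)))
      = (\<Sum>s\<in>S. c s * mat_trace (\<tau> (y \<otimes> (x \<otimes> s \<otimes> inv x))))"
    using subgroup.m_closed[OF K(1) y] K(2) N.inv_op_closed2[OF x]
    by (intro sum.cong refl) (auto simp: res_def char_of_def)
  also have "\<dots> = (\<Sum>s\<in>S. c (inv x \<otimes> s \<otimes> x) * mat_trace (\<tau> (y \<otimes> (x \<otimes> (inv x \<otimes> s \<otimes> x) \<otimes> inv x))))"
    by (rule sum.reindex_bij_betw[OF normal_conj_bij_betw[OF N x], symmetric])
  also have "\<dots> = (\<Sum>s\<in>S. c (inv x \<otimes> s \<otimes> x) * mat_trace (\<tau> y * \<tau> s))"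
    using x S_carrier y K(2) mult by (intro sum.cong refl) (auto simp: m_assoc)
  also have "\<dots> = mat_trace (\<tau> y * rep_lincomb S n \<tau> (\<lambda>s. c (inv x \<otimes> s \<otimes> x)))"
    using \<tau>[OF y] \<tau> K(2) by (intro mat_trace_mult_rep_lincomb[symmetric]) auto
  finally show ?thesis .
qed

lemma sum_idem_coeff_res_conj:
  fixes S H :: "'a set" and \<rho> \<tau> :: "'a \<Rightarrow> complex mat"
  defines "K \<equiv> stab G H S (char_of S \<rho>)"
  assumes N: "S \<lhd> G" and fin: "finite S" and H: "subgroup H G" "S \<subseteq> H"
    and irr_\<rho>: "irr_rep G S m \<rho>" and rep_\<tau>: "is_rep G K n \<tau>"
    and one: "rep_lincomb S n \<tau> (idem_coeff G S (char_of S \<rho>)) = 1\<^sub>m n"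
    and h: "h \<in> K" and x: "x \<in> H"
  shows "(\<Sum>s\<in>S. idem_coeff G S (char_of S \<rho>) s * res K (char_of K \<tau>) (x \<otimes> (h \<otimes> s) \<otimes> inv x))
    = (if x \<in> K then char_of K \<tau> h else 0)"
proof -
  interpret N: normal S G by fact
  let ?e = "idem_coeff G S (char_of S \<rho>)"
  have K: "subgroup K G" unfolding K_def by (rule stab_normal_subgroup[OF H(1) N])
  have rep_\<rho>: "is_rep G S m \<rho>" using irr_\<rho> by (simp add: irr_rep_def)
  have SK: "S \<subseteq> K" unfolding K_def by (rule normal_subset_stab_char[OF N H rep_\<rho>])
  have xc: "x \<in> carrier G" using x subgroup.subset[OF H(1)] by blast
  have hc: "h \<in> carrier G" using h subgroup.subset[OF K] by blast
  have conj_S: "\<And>s. s \<in> S \<Longrightarrow> x \<otimes> s \<otimes> inv x \<in> S" using N.inv_op_closed2[OF xc] by blast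
  have conj_carrier: "\<And>s. s \<in> S \<Longrightarrow> x \<otimes> s \<otimes> inv x \<in> carrier G" using conj_S N.subset by blast
  define y where "y = x \<otimes> h \<otimes> inv x"
  have yc: "y \<in> carrier G" unfolding y_def using xc hc by simp
  have "(\<Sum>s\<in>S. ?e s * res K (char_of K \<tau>) (x \<otimes> (h \<otimes> s) \<otimes> inv x))
      = (\<Sum>s\<in>S. ?e s * res K (char_of K \<tau>) (y \<otimes> (x \<otimes> s \<otimes> inv x)))"
    unfolding y_def using xc hc N.subset by (intro sum.cong refl) (auto simp: m_assoc)
  also have "\<dots> = (if x \<in> K then char_of K \<tau> h else 0)"
  proof (cases "y \<in> K")
    case False
    have "x \<notin> K" using False h subgroup.m_closed[OF K] subgroup.m_inv_closed[OF K] unfolding y_def by blast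
    moreover have "y \<otimes> (x \<otimes> s \<otimes> inv x) \<notin> K" if s: "s \<in> S" for s
    proof
      assume "y \<otimes> (x \<otimes> s \<otimes> inv x) \<in> K"
      then have "y \<otimes> (x \<otimes> s \<otimes> inv x) \<otimes> inv (x \<otimes> s \<otimes> inv x) \<in> K"
        using SK conj_S[OF s] subgroup.m_closed[OF K] subgroup.m_inv_closed[OF K] by blast
      then show False using False yc conj_carrier[OF s] by (simp add: m_assoc)
    qed
    ultimately show ?thesis by (simp add: res_def)
  next
    case y: True
    have "(\<Sum>s\<in>S. ?e s * res K (char_of K \<tau>) (y \<otimes> (x \<otimes> s \<otimes> inv x)))
        = mat_trace (\<tau> y * rep_lincomb S n \<tau> (\<lambda>s. ?e (inv x \<otimes> s \<otimes> x)))"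
      by (rule sum_res_char_conj_eq_mat_trace[OF N K SK rep_\<tau> xc y])
    also have "\<dots> = mat_trace (\<tau> y * (if x \<in> K then 1\<^sub>m n else 0\<^sub>m n n))"
      using rep_lincomb_conj_idem_coeff[OF N fin H irr_\<rho> rep_\<tau>[unfolded K_def] one x]
      unfolding K_def by simp
    also have "\<dots> = (if x \<in> K then char_of K \<tau> h else 0)"
    proof (cases "x \<in> K")
      case True
      have \<tau>_y: "\<tau> y \<in> carrier_mat n n" using rep_\<tau> y unfolding is_rep_def by blast
      then show ?thesis
        using rep_trace_conj[OF K rep_\<tau> True h] right_mult_one_mat[OF \<tau>_y] True h
        by (simp add: y_def char_of_def)
    next
      case False
      have "\<tau> y \<in> carrier_mat n n" using rep_\<tau> y unfolding is_rep_def by blast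
      then show ?thesis
        using False right_mult_zero_mat[of "\<tau> y" n n n] by (simp add: mat_trace_def)
    qed
    finally show ?thesis .
  qed
  finally show ?thesis .
qed

lemma isotypic_component_rep:
  assumes N: "S \<lhd> G" and fin: "finite (carrier G)" and irr_\<rho>: "irr_rep G S m \<rho>"
    and \<sigma>: "is_rep G E d \<sigma>" and E: "E \<subseteq> carrier G" "S \<subseteq> E" and T: "T \<subseteq> E"
    and T_fixes: "\<And>t s. t \<in> T \<Longrightarrow> s \<in> S \<Longrightarrow> char_of S \<rho> (t \<otimes> s \<otimes> inv t) = char_of S \<rho> s"
  obtains r \<rho>' where "is_rep G T r \<rho>'"
    and "\<And>t. t \<in> T \<Longrightarrow> mat_trace (\<rho>' t) = mat_trace (rep_lincomb S d \<sigma> (idem_coeff G S (char_of S \<rho>)) * \<sigma> t)"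
proof -
  interpret N: normal S G by fact
  have fin_S: "finite S" using finite_subset[OF N.subset fin] .
  let ?P = "rep_lincomb S d \<sigma> (idem_coeff G S (char_of S \<rho>))"
  have \<sigma>_S: "\<And>s. s \<in> S \<Longrightarrow> \<sigma> s \<in> carrier_mat d d"
    and \<sigma>_mult: "\<And>a b. a \<in> S \<Longrightarrow> b \<in> S \<Longrightarrow> \<sigma> (a \<otimes> b) = \<sigma> a * \<sigma> b"
    using \<sigma> E(2) unfolding is_rep_def by auto
  have "?P * ?P = ?P"
    by (rule rep_lincomb_idem_coeff_idempotent[OF N.subgroup_axioms fin_S irr_\<rho> \<sigma>_S \<sigma>_mult])
  moreover have "\<sigma> t * ?P = ?P * \<sigma> t" if t: "t \<in> T" for t
  proof (rule rep_lincomb_idem_coeff_commute[OF N E \<sigma>])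
    show "t \<in> E" using t T by blast
    show "char_of S \<rho> (t \<otimes> s \<otimes> inv t) = char_of S \<rho> s" if "s \<in> S" for s
      using T_fixes[OF t that] .
  qed
  ultimately show ?thesis
    using is_rep_from_commuting_idempotent[OF is_rep_subset[OF \<sigma> T] rep_lincomb_carrier] that by blast
qed

lemma mat_trace_isotypic_projection_mult:
  fixes S H E :: "'a set" and \<rho> \<tau> \<sigma> :: "'a \<Rightarrow> complex mat"
  defines "K \<equiv> stab G H S (char_of S \<rho>)"
  assumes fin: "finite (carrier G)" and N: "S \<lhd> G" and H: "subgroup H G" "S \<subseteq> H"
    and irr_\<rho>: "irr_rep G S m \<rho>" and irr_\<tau>: "irr_rep G K n \<tau>"
    and above: "lies_above S (char_of K \<tau>) (char_of S \<rho>)"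
    and \<sigma>: "is_rep G E d \<sigma>" "H \<subseteq> E"
    and \<sigma>_ind: "res H (char_of E \<sigma>) = ind G K H (char_of K \<tau>)"
    and h: "h \<in> K"
  shows "mat_trace (rep_lincomb S d \<sigma> (idem_coeff G S (char_of S \<rho>)) * \<sigma> h) = char_of K \<tau> h"
proof -
  interpret N: normal S G by fact
  let ?e = "idem_coeff G S (char_of S \<rho>)" and ?\<theta> = "char_of K \<tau>"
  have fin_S: "finite S" using fin N.subset finite_subset by blast
  have K: "subgroup K G" unfolding K_def by (rule stab_normal_subgroup[OF H(1) N])
  have K_fixes: "\<And>k s. k \<in> K \<Longrightarrow> s \<in> S \<Longrightarrow> char_of S \<rho> (k \<otimes> s \<otimes> inv k) = char_of S \<rho> s"
    and KH: "K \<subseteq> H"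
    unfolding K_def using stab_normal_iff[OF N subgroup.subset[OF H(1)]] by blast+
  have rep_\<rho>: "is_rep G S m \<rho>" and rep_\<tau>: "is_rep G K n \<tau>"
    using irr_\<rho> irr_\<tau> by (simp_all add: irr_rep_def)
  have SK: "S \<subseteq> K" unfolding K_def by (rule normal_subset_stab_char[OF N H rep_\<rho>])
  have one: "rep_lincomb S n \<tau> ?e = 1\<^sub>m n"
    by (rule rep_lincomb_idem_coeff_eq_one[OF N fin_S irr_\<rho> K SK K_fixes irr_\<tau> above])
  have \<sigma>_carrier: "\<And>g. g \<in> E \<Longrightarrow> \<sigma> g \<in> carrier_mat d d"
    and \<sigma>_mult: "\<And>a b. a \<in> E \<Longrightarrow> b \<in> E \<Longrightarrow> \<sigma> (a \<otimes> b) = \<sigma> a * \<sigma> b"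
    using \<sigma>(1) unfolding is_rep_def by auto
  have trace_\<sigma>: "mat_trace (\<sigma> g) = ind G K H ?\<theta> g" if "g \<in> H" for g
    using arg_cong[OF \<sigma>_ind, of "\<lambda>f. f g"] that \<sigma>(2) by (auto simp: res_def char_of_def)
  have hH: "h \<in> H" using h KH by blast
  have hE: "h \<in> E" using hH \<sigma>(2) by blast
  have \<sigma>_S: "\<And>s. s \<in> S \<Longrightarrow> \<sigma> s \<in> carrier_mat d d" using \<sigma>_carrier H(2) \<sigma>(2) by blast
  have "card K > 0"
    using finite_subset[OF subgroup.subset[OF K] fin] subgroup.one_closed[OF K] by (auto simp: card_gt_0_iff)
  have "mat_trace (rep_lincomb S d \<sigma> ?e * \<sigma> h) = mat_trace (\<sigma> h * rep_lincomb S d \<sigma> ?e)"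
    using \<sigma>_carrier[OF hE] by (intro mat_trace_mult_comm[of _ d d]) auto
  also have "\<dots> = (\<Sum>s\<in>S. ?e s * mat_trace (\<sigma> h * \<sigma> s))"
    using \<sigma>_carrier[OF hE] \<sigma>_S by (rule mat_trace_mult_rep_lincomb[where \<pi> = \<sigma> and c = ?e])
  also have "\<dots> = (\<Sum>s\<in>S. ?e s * ((\<Sum>x\<in>H. res K ?\<theta> (x \<otimes> (h \<otimes> s) \<otimes> inv x)) / of_nat (card K)))"
  proof (intro sum.cong refl)
    fix s assume s: "s \<in> S"
    have sH: "s \<in> H" using s H(2) by blast
    have hsH: "h \<otimes> s \<in> H" by (rule subgroup.m_closed[OF H(1) hH sH])
    have sE: "s \<in> E" using sH \<sigma>(2) by blast
    have "mat_trace (\<sigma> h * \<sigma> s) = mat_trace (\<sigma> (h \<otimes> s))"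
      using \<sigma>_mult[OF hE sE] by simp
    also have "\<dots> = ind G K H ?\<theta> (h \<otimes> s)"
      by (rule trace_\<sigma>[OF hsH])
    also have "\<dots> = (\<Sum>x\<in>H. res K ?\<theta> (x \<otimes> (h \<otimes> s) \<otimes> inv x)) / of_nat (card K)"
      using hsH unfolding ind_def by simp
    finally show "?e s * mat_trace (\<sigma> h * \<sigma> s) = ?e s * ((\<Sum>x\<in>H. res K ?\<theta> (x \<otimes> (h \<otimes> s) \<otimes> inv x)) / of_nat (card K))"
      by simp
  qed
  also have "\<dots> = (\<Sum>x\<in>H. \<Sum>s\<in>S. ?e s * res K ?\<theta> (x \<otimes> (h \<otimes> s) \<otimes> inv x)) / of_nat (card K)"
    by (simp add: sum_divide_distrib sum_distrib_left) (rule sum.swap)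
  also have "\<dots> = (\<Sum>x\<in>H. if x \<in> K then ?\<theta> h else 0) / of_nat (card K)"
    using sum_idem_coeff_res_conj[OF N fin_S H irr_\<rho> rep_\<tau>[unfolded K_def] one[unfolded K_def] h[unfolded K_def]]
    unfolding K_def by simp
  also have "(\<Sum>x\<in>H. if x \<in> K then ?\<theta> h else 0) = of_nat (card K) * ?\<theta> h"
    using sum.inter_restrict[OF finite_subset[OF subgroup.subset[OF H(1)] fin], of "\<lambda>_. ?\<theta> h" K] KH
    by (simp add: Int_absorb1 Int_commute)
  finally show ?thesis using \<open>card K > 0\<close> by simp
qed

lemma clifford_correspondent_extends:
  fixes S H E :: "'a set" and \<rho> \<tau> \<sigma> :: "'a \<Rightarrow> complex mat"
  defines "K \<equiv> stab G H S (char_of S \<rho>)"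
  assumes fin: "finite (carrier G)" and N: "S \<lhd> G" and H: "subgroup H G" "S \<subseteq> H"
    and irr_\<rho>: "irr_rep G S m \<rho>" and irr_\<tau>: "irr_rep G K n \<tau>"
    and above: "lies_above S (char_of K \<tau>) (char_of S \<rho>)"
    and \<sigma>: "is_rep G E d \<sigma>" "H \<subseteq> E" "E \<subseteq> carrier G"
    and \<sigma>_ind: "res H (char_of E \<sigma>) = ind G K H (char_of K \<tau>)"
  shows "extends_to G (E \<inter> stab G (carrier G) S (char_of S \<rho>)) K (char_of K \<tau>)"
proof -
  let ?T = "E \<inter> stab G (carrier G) S (char_of S \<rho>)"
  let ?P = "rep_lincomb S d \<sigma> (idem_coeff G S (char_of S \<rho>))"
  have "K \<subseteq> H" unfolding K_def by (rule stab_subset)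
  moreover have "K \<subseteq> stab G (carrier G) S (char_of S \<rho>)"
    unfolding K_def by (rule stab_mono[OF subgroup.subset[OF H(1)]])
  ultimately have "K \<subseteq> ?T" using \<sigma>(2) by blast
  have "S \<subseteq> E" using H(2) \<sigma>(2) by blast
  have T_fixes: "char_of S \<rho> (t \<otimes> s \<otimes> inv t) = char_of S \<rho> s" if "t \<in> ?T" "s \<in> S" for t s
    using that by (intro stab_fixes[of t G "carrier G" S]) auto
  obtain r \<rho>' where rep': "is_rep G ?T r \<rho>'" and trace': "\<And>t. t \<in> ?T \<Longrightarrow> mat_trace (\<rho>' t) = mat_trace (?P * \<sigma> t)"
    using isotypic_component_rep[OF N fin irr_\<rho> \<sigma>(1,3) \<open>S \<subseteq> E\<close> Int_lower1 T_fixes] by blast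
  show ?thesis
  proof (rule extends_to_if_trace_eq[OF rep' \<open>K \<subseteq> ?T\<close>])
    fix h assume h: "h \<in> K"
    then have "mat_trace (\<rho>' h) = mat_trace (?P * \<sigma> h)"
      using \<open>K \<subseteq> ?T\<close> trace' by blast
    also have "\<dots> = char_of K \<tau> h"
      using mat_trace_isotypic_projection_mult[OF fin N H irr_\<rho> irr_\<tau>[unfolded K_def] above[unfolded K_def]
          \<sigma>(1,2) \<sigma>_ind[unfolded K_def] h[unfolded K_def]]
      unfolding K_def .
    finally show "mat_trace (\<rho>' h) = char_of K \<tau> h" .
  qed
qed

end

theorem lemma6p1:
  fixes G :: "('a, 'b) monoid_scheme" and S H :: "'a set"
    and \<theta> lam theta_lam :: "'a \<Rightarrow> complex"
  assumes "group G" and "finite (carrier G)"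
    and "subgroup H G" and "S \<lhd> G" and "S \<subseteq> H"
    and "\<theta> \<in> Irr G H" and "lam \<in> Irr G S" and "lies_above S \<theta> lam"
    and "theta_lam \<in> Irr G (stab G H S lam)" and "lies_above S theta_lam lam"
    and "ind G (stab G H S lam) H theta_lam = \<theta>"
    and "extends_to G (stab G (carrier G) H \<theta>) H \<theta>"
  shows "extends_to G (stab G (carrier G) H \<theta> \<inter> stab G (carrier G) S lam)
           (stab G H S lam) theta_lam"
proof -
  interpret group G by fact
  obtain m \<rho> where irr_\<rho>: "irr_rep G S m \<rho>" and lam: "lam = char_of S \<rho>"
    using assms(7) unfolding Irr_def by auto
  obtain n \<tau> where irr_\<tau>: "irr_rep G (stab G H S lam) n \<tau>"
    and theta_lam: "theta_lam = char_of (stab G H S lam) \<tau>"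
    using assms(9) unfolding Irr_def by auto
  obtain d \<sigma> where \<sigma>: "is_rep G (stab G (carrier G) H \<theta>) d \<sigma>"
    and \<sigma>_extends: "res H (char_of (stab G (carrier G) H \<theta>) \<sigma>) = \<theta>"
    using assms(12) unfolding extends_to_def is_character_def by auto
  obtain k \<psi> where rep_\<psi>: "is_rep G H k \<psi>" and \<theta>: "\<theta> = char_of H \<psi>"
    using assms(6) unfolding Irr_def irr_rep_def by auto
  have HE: "H \<subseteq> stab G (carrier G) H \<theta>"
    unfolding \<theta> by (rule subgroup_subset_stab_char[OF assms(3) rep_\<psi>])
  have \<sigma>_ind: "res H (char_of (stab G (carrier G) H \<theta>) \<sigma>) = ind G (stab G H S lam) H theta_lam"
    using \<sigma>_extends assms(11) by simp
  show ?thesis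
    using clifford_correspondent_extends[OF assms(2,4,3,5) irr_\<rho> irr_\<tau>[unfolded lam]
        assms(10)[unfolded lam theta_lam] \<sigma> HE stab_subset \<sigma>_ind[unfolded lam theta_lam]]
    unfolding lam theta_lam .
qed

end
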